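(* Let $G$ be a connected threshold graph with binary string $b=0^{s_1}1^{t_1}\cdots 0^{s_k}1^{t_k}$ (all $s_i,t_i\geq1$). Let $s=\sum_{i=1}^k s_i$, $t=\sum_{i=1}^k t_i$, and $n=s+t$ the number of vertices of $G$. (i) If $s_1\geq 2$, then $\lambda_i(G)\leq \lambda_i(A_{2k+1})<-1$ for $i=1,\ldots,k$, and $0<\lambda_{k+1+i}(A_{2k+1})\leq \lambda_{n-k+i}(G)$ for $i=1,\ldots,k$. Consequently $m_{-1}(G)=t-k$ and $m_0(G)=s-k$, and $G$ has $k$ non-trivial negative and $k$ non-trivial positive eigenvalues. (ii) If $s_1=1$, then $\lambda_i(G)\leq\lambda_i(A_{2k})<-1$ for $i=1,\ldots,k-1$, and $0<\lambda_{k+i}(A_{2k})\leq\lambda_{n-k+i}(G)$ for $i=1,\ldots,k$. Consequently $m_{-1}(G)=t-k+1$ and $m_0(G)=s-k$, and $G$ has $k-1$ non-trivial negative and $k$ non-trivial positive eigenvalues. In either case, $G$ has inertia $(t,\,s-k,\,k)$.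
   Context: Eigenvalues of a graph $H$ on $m$ vertices are those of its $(0,1)$-adjacency matrix, ordered $\lambda_1(H)\leq\cdots\leq\lambda_m(H)$; $m_\lambda(H)$ is the algebraic multiplicity of $\lambda$. An eigenvalue is non-trivial if it is not in $\{-1,0\}$. The inertia of $H$ is the triple (number of negative eigenvalues, number of zero eigenvalues, number of positive eigenvalues). Threshold graphs from binary strings: given $b=b_1\cdots b_n\in\{0,1\}^n$ with $b_1=0$, start with a single vertex and for $j=2,\ldots,n$ add a new vertex adjacent to all previous vertices if $b_j=1$ and isolated if $b_j=0$; the result is $G(b)$, and $b$ is its binary string. $0^s$ (resp. $1^t$) denotes $s$ consecutive zeros (resp. $t$ consecutive ones). The anti-regular graph $A_m$ is $G(b)$ with $b=0101\cdots01$ (length $m$) for $m$ even and $b=00101\cdots01$ (length $m$) for $m$ odd. *)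

theory Defs
  imports "Jordan_Normal_Form.Char_Poly" "HOL-Computational_Algebra.Polynomial_Factorial"
begin

text \<open>Threshold graph G(b) for a binary string b (list of 0/1 naturals), vertices 0..n-1
  (vertex j is the (j+1)-th added vertex). Adjacency matrix over the reals:
  i \<noteq> j adjacent iff the later of the two vertices was added as dominating (b ! max i j = 1).\<close>
definition threshold_adj :: "nat list \<Rightarrow> real mat" where
  "threshold_adj b = mat (length b) (length b)
     (\<lambda>(i, j). if i \<noteq> j \<and> b ! max i j = 1 then 1 else 0)"

text \<open>Binary string 0^{s_1} 1^{t_1} ... 0^{s_k} 1^{t_k} (blocks indexed 0..k-1).\<close>
definition block_string :: "nat \<Rightarrow> (nat \<Rightarrow> nat) \<Rightarrow> (nat \<Rightarrow> nat) \<Rightarrow> nat list" where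
  "block_string k s t = concat (map (\<lambda>i. replicate (s i) 0 @ replicate (t i) 1) [0..<k])"

definition antireg_string :: "nat \<Rightarrow> nat list" where
  "antireg_string m = (if even m then concat (replicate (m div 2) [0, 1])
                       else 0 # concat (replicate (m div 2) [0, 1]))"

definition antireg_adj :: "nat \<Rightarrow> real mat" where
  "antireg_adj m = threshold_adj (antireg_string m)"

text \<open>Eigenvalues (with algebraic multiplicity) in nondecreasing order: the real roots of the
  characteristic polynomial (which splits for real symmetric matrices).\<close>
definition eigs :: "real mat \<Rightarrow> real list" where
  "eigs A = sorted_list_of_multiset (proots (char_poly A))"

definition eig :: "real mat \<Rightarrow> nat \<Rightarrow> real" where
  "eig A i = eigs A ! (i - 1)"

definition eig_mult :: "real \<Rightarrow> real mat \<Rightarrow> nat" where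
  "eig_mult x A = order x (char_poly A)"

definition inertia :: "real mat \<Rightarrow> nat \<times> nat \<times> nat" where
  "inertia A = (length (filter (\<lambda>x. x < 0) (eigs A)),
                length (filter (\<lambda>x. x = 0) (eigs A)),
                length (filter (\<lambda>x. x > 0) (eigs A)))"

definition nontriv_neg :: "real mat \<Rightarrow> nat" where
  "nontriv_neg A = length (filter (\<lambda>x. x < 0 \<and> x \<noteq> -1) (eigs A))"

definition nontriv_pos :: "real mat \<Rightarrow> nat" where
  "nontriv_pos A = length (filter (\<lambda>x. x > 0) (eigs A))"

end

(*
  All eigenvalues of G are located by counting them in five classes: below -1, equal to -1,
  strictly between -1 and 0, equal to 0, and above 0.

  Vertices of one block have the same neighbours apart from each other, so for two of them
  e_a - e_c is an eigenvector, for -1 in a block of ones and for 0 in a block of zeros; if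
  s_1 = 1 the first vertex is moreover a twin of the first block of ones. This yields
  T - k (+ 1 if s_1 = 1) independent eigenvectors for -1 and S - k for 0.

  The first vertices of all blocks (together with the second vertex of the first block if
  s_1 >= 2) induce the anti-regular graph A_2k (resp. A_2k+1). By Cauchy interlacing G has at
  least as many eigenvalues below -1 and above 0 as this subgraph, namely k - 1 and k (resp. k
  and k); for anti-regular graphs this follows by induction, as A_m is A_m+1 minus its first
  vertex, A_2k is nonsingular and -1 is not an eigenvalue of A_2k+3.

  These lower bounds add up to n, so all of them are attained and no eigenvalue lies strictly
  between -1 and 0. Interlacing is proved with Rayleigh quotients over an orthogonal eigenbasis,
  which exists since a real symmetric matrix has real eigenvalues and only Jordan blocks of size 1.
*)
theory Submission
  imports Defs "Jordan_Normal_Form.Jordan_Normal_Form_Existence"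
    "Jordan_Normal_Form.Jordan_Normal_Form_Uniqueness"
begin

section \<open>Real symmetric matrices are diagonalisable\<close>

definition symmetric_mat :: "nat \<Rightarrow> 'a mat \<Rightarrow> bool" where
  "symmetric_mat n A \<longleftrightarrow> A \<in> carrier_mat n n \<and> (\<forall>i<n. \<forall>j<n. A $$ (i,j) = A $$ (j,i))"

lemma symmetric_mat_carrier: "symmetric_mat n A \<Longrightarrow> A \<in> carrier_mat n n"
  unfolding symmetric_mat_def by auto

lemma symmetric_mat_char_matrix: "symmetric_mat n A \<Longrightarrow> symmetric_mat n (char_matrix A e)"
  unfolding symmetric_mat_def char_matrix_def by auto

lemma symmetric_mat_scalar_prod:
  fixes M :: "'a :: comm_semiring_0 mat"
  assumes S: "symmetric_mat n M" and x: "x \<in> carrier_vec n" and y: "y \<in> carrier_vec n"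
  shows "(M *\<^sub>v x) \<bullet> y = x \<bullet> (M *\<^sub>v y)"
proof -
  have M: "M \<in> carrier_mat n n" using S by (rule symmetric_mat_carrier)
  have "(M *\<^sub>v x) \<bullet> y = (\<Sum>i<n. \<Sum>j<n. M $$ (i,j) * x $ j * y $ i)"
    using M x y by (auto simp: scalar_prod_def lessThan_atLeast0 sum_distrib_right intro!: sum.cong)
  also have "\<dots> = (\<Sum>j<n. \<Sum>i<n. M $$ (i,j) * x $ j * y $ i)" by (rule sum.swap)
  also have "\<dots> = (\<Sum>j<n. x $ j * (\<Sum>i<n. M $$ (j,i) * y $ i))"
    unfolding sum_distrib_left using S unfolding symmetric_mat_def
    by (intro sum.cong refl) (simp add: ac_simps)
  also have "\<dots> = x \<bullet> (M *\<^sub>v y)"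
    using M x y by (auto simp: scalar_prod_def lessThan_atLeast0 intro!: sum.cong)
  finally show ?thesis .
qed

lemma symmetric_mat_real_eigenvalue:
  fixes A :: "real mat"
  assumes S: "symmetric_mat n A" and a: "poly (char_poly (map_mat complex_of_real A)) a = 0"
  shows "Im a = 0"
proof -
  let ?Ac = "map_mat complex_of_real A"
  have A: "A \<in> carrier_mat n n" using S by (rule symmetric_mat_carrier)
  hence Ac: "?Ac \<in> carrier_mat n n" by auto
  have "eigenvalue ?Ac a" using eigenvalue_root_char_poly[OF Ac] a by auto
  then obtain v where v: "v \<in> carrier_vec n" "v \<noteq> 0\<^sub>v n" and Av: "?Ac *\<^sub>v v = a \<cdot>\<^sub>v v"
    using Ac unfolding eigenvalue_def eigenvector_def by auto
  have row: "(\<Sum>j<n. complex_of_real (A $$ (i,j)) * v $ j) = a * v $ i" if i: "i < n" for i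
  proof -
    have "(?Ac *\<^sub>v v) $ i = (a \<cdot>\<^sub>v v) $ i" using Av by simp
    thus ?thesis using i A v by (auto simp: scalar_prod_def lessThan_atLeast0 intro!: sum.cong)
  qed
  define q where "q = (\<Sum>i<n. cnj (v $ i) * (\<Sum>j<n. complex_of_real (A $$ (i,j)) * v $ j))"
  define N where "N = (\<Sum>i<n. cnj (v $ i) * v $ i)"
  \<comment> \<open>the Hermitian form \<open>q = v\<^sup>* A v\<close> is real and equals \<open>a |v|\<^sup>2\<close>\<close>
  have "q = (\<Sum>i<n. cnj (v $ i) * (a * v $ i))" unfolding q_def by (intro sum.cong) (auto simp: row)
  hence q_eq: "q = a * N" unfolding N_def by (simp add: sum_distrib_left algebra_simps)
  have "cnj q = (\<Sum>i<n. \<Sum>j<n. v $ i * (complex_of_real (A $$ (i,j)) * cnj (v $ j)))"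
    unfolding q_def by (simp add: sum_distrib_left)
  also have "\<dots> = (\<Sum>j<n. \<Sum>i<n. v $ i * (complex_of_real (A $$ (i,j)) * cnj (v $ j)))"
    by (rule sum.swap)
  also have "\<dots> = q" unfolding q_def using S unfolding symmetric_mat_def
    by (auto simp: sum_distrib_left algebra_simps intro!: sum.cong)
  finally have "Im q = 0" by (metis Reals_cnj_iff complex_is_Real_iff)
  have N_real: "N = complex_of_real (\<Sum>i<n. (cmod (v $ i))\<^sup>2)"
    unfolding N_def of_real_sum by (intro sum.cong refl) (metis complex_norm_square mult.commute)
  obtain i where "i < n" "v $ i \<noteq> 0" using v by (metis eq_vecI carrier_vecD index_zero_vec(1,2))
  hence "(\<Sum>i<n. (cmod (v $ i))\<^sup>2) > 0" by (intro sum_pos2[of _ i]) auto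
  thus ?thesis using \<open>Im q = 0\<close> q_eq N_real by simp
qed

lemma symmetric_mat_char_poly_splits:
  fixes A :: "real mat"
  assumes S: "symmetric_mat n A"
  shows "\<exists>es. char_poly A = (\<Prod>e\<leftarrow>es. [:-e, 1:])"
proof -
  let ?Ac = "map_mat complex_of_real A"
  have A: "A \<in> carrier_mat n n" using S by (rule symmetric_mat_carrier)
  obtain as where as: "char_poly ?Ac = (\<Prod>a\<leftarrow>as. [:-a, 1:])"
    using char_poly_factorized[of ?Ac n] A by auto
  have real: "complex_of_real (Re a) = a" if "a \<in> set as" for a
  proof -
    have "poly (char_poly ?Ac) a = 0"
      unfolding as poly_prod_list_zero_iff using that by (auto intro!: bexI[of _ "[:-a,1:]"])
    from symmetric_mat_real_eigenvalue[OF S this] show ?thesis by (simp add: complex_eq_iff)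
  qed
  interpret of_real_poly: map_poly_inj_comm_ring_hom complex_of_real ..
  have "map_poly complex_of_real (\<Prod>e\<leftarrow>map Re as. [:-e, 1:]) = (\<Prod>a\<leftarrow>as. [:-a, 1:])"
    unfolding of_real_poly.hom_prod_list map_map
    by (rule arg_cong[of _ _ prod_list], rule map_cong[OF refl], simp add: real)
  also have "\<dots> = map_poly complex_of_real (char_poly A)"
    using of_real_hom.char_poly_hom[OF A] as by metis
  finally have "char_poly A = (\<Prod>e\<leftarrow>map Re as. [:-e, 1:])" by simp
  thus ?thesis ..
qed

lemma symmetric_mat_kernel_square:
  fixes A :: "real mat"
  assumes S: "symmetric_mat n A"
  shows "mat_kernel (char_matrix A e ^\<^sub>m 2) = mat_kernel (char_matrix A e ^\<^sub>m 1)"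
proof -
  let ?M = "char_matrix A e"
  have SM: "symmetric_mat n ?M" using S by (rule symmetric_mat_char_matrix)
  have M: "?M \<in> carrier_mat n n" using SM by (rule symmetric_mat_carrier)
  have "?M *\<^sub>v v = 0\<^sub>v n" if v: "v \<in> carrier_vec n" and z: "?M *\<^sub>v (?M *\<^sub>v v) = 0\<^sub>v n" for v
  proof -
    have w: "?M *\<^sub>v v \<in> carrier_vec n" using M v by simp
    have "(?M *\<^sub>v v) \<bullet> (?M *\<^sub>v v) = v \<bullet> (?M *\<^sub>v (?M *\<^sub>v v))"
      by (rule symmetric_mat_scalar_prod[OF SM v w])
    also have "\<dots> = 0" unfolding z using v by simp
    finally have "(?M *\<^sub>v v) \<bullet> (?M *\<^sub>v v) = 0" .
    moreover have "conjugate (?M *\<^sub>v v) = ?M *\<^sub>v v" by (intro eq_vecI) simp_all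
    ultimately have "(?M *\<^sub>v v) \<bullet>c (?M *\<^sub>v v) = 0" by simp
    thus ?thesis using conjugate_square_eq_0_vec[OF w] by blast
  qed
  moreover have "(?M * ?M) *\<^sub>v v = ?M *\<^sub>v (?M *\<^sub>v v)" if "v \<in> carrier_vec n" for v
    using M that by simp
  ultimately show ?thesis
    using M by (auto simp: mat_kernel_def numeral_2_eq_2)
qed

lemma symmetric_mat_jordan_blocks_trivial:
  fixes A :: "real mat"
  assumes S: "symmetric_mat n A" and J: "jordan_nf A n_as"
  shows "\<forall>x\<in>set n_as. fst x = 1"
proof
  fix x assume x: "x \<in> set n_as"
  obtain s e where se: "x = (s, e)" by fastforce
  let ?sizes = "map fst [(n, e')\<leftarrow>n_as . e' = e]"
  have "s \<noteq> 0" using J x se unfolding jordan_nf_def by force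
  have "dim_gen_eigenspace A e 2 = dim_gen_eigenspace A e 1"
    unfolding dim_gen_eigenspace_def kernel_dim_def using symmetric_mat_kernel_square[OF S, of e]
    by (simp add: symmetric_mat_carrier[OF S])
  hence "(\<Sum>n\<leftarrow>?sizes. min 2 n) = (\<Sum>n\<leftarrow>?sizes. min 1 n)"
    unfolding dim_gen_eigenspace[OF J] .
  moreover have "(\<Sum>n\<leftarrow>?sizes. min 2 n) = (\<Sum>n\<leftarrow>?sizes. min 1 n) + (\<Sum>n\<leftarrow>?sizes. min 2 n - min 1 n)"
    by (subst sum_list_addf[symmetric], rule arg_cong[where f = sum_list], rule map_cong) auto
  ultimately have "(\<Sum>n\<leftarrow>?sizes. min 2 n - min 1 n) = 0" by linarith
  hence "min 2 s - min 1 s = 0" using x se by force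
  thus "fst x = 1" using se \<open>s \<noteq> 0\<close> by simp
qed

lemma proots_prod_linear: "proots (\<Prod>a\<leftarrow>xs. [:-a, 1:]) = mset (xs :: real list)"
proof (induct xs)
  case (Cons a xs)
  have "proots ([:-a, 1:] * (\<Prod>a\<leftarrow>xs. [:-a, 1:])) = proots [:-a, 1:] + mset xs"
    using Cons by (subst proots_mult) auto
  thus ?case by simp
qed simp

lemma jordan_matrix_diagonal:
  "\<forall>x\<in>set n_as. fst x = 1 \<Longrightarrow> jordan_matrix n_as
     = mat (length n_as) (length n_as) (\<lambda>(i,j). if i = j then snd (n_as ! i) else (0 :: 'a :: {zero,one}))"
proof (induct n_as)
  case Nil
  show ?case unfolding jordan_matrix_def by (intro eq_matI) auto
next
  case (Cons x n_as)
  obtain a where x: "x = (1,a)" using Cons(2) by (cases x) auto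
  have "sum_list (map fst n_as) = length n_as" using Cons(2) by (induct n_as) auto
  thus ?case unfolding x jordan_matrix_Cons using Cons by (intro eq_matI) (auto simp: nth_Cons')
qed

lemma symmetric_mat_diagonalizable:
  fixes A :: "real mat"
  assumes S: "symmetric_mat n A"
  obtains Pm Q d where "Pm \<in> carrier_mat n n" and "Q \<in> carrier_mat n n" and "Q * Pm = 1\<^sub>m n"
    and "A * Pm = Pm * mat n n (\<lambda>(i,j). if i = j then d i else 0)"
    and "mset (eigs A) = mset (map d [0..<n])"
proof -
  have A: "A \<in> carrier_mat n n" using S by (rule symmetric_mat_carrier)
  obtain es where "char_poly A = (\<Prod>e\<leftarrow>es. [:-e, 1:])"
    using symmetric_mat_char_poly_splits[OF S] by blast
  then obtain n_as where J: "jordan_nf A n_as" using jordan_nf_exists[OF A] by blast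
  have one: "\<forall>x\<in>set n_as. fst x = 1" by (rule symmetric_mat_jordan_blocks_trivial[OF S J])
  let ?J = "jordan_matrix n_as"
  have sim: "similar_mat A ?J" using J unfolding jordan_nf_def by auto
  from similar_matD[OF sim] obtain n' Pm Q where
    PQ: "{A, ?J, Pm, Q} \<subseteq> carrier_mat n' n'" "Q * Pm = 1\<^sub>m n'" "A = Pm * ?J * Q"
    by auto
  have n': "n' = n" using PQ(1) A by auto
  have Jc: "?J \<in> carrier_mat n n" and Pc: "Pm \<in> carrier_mat n n" and Qc: "Q \<in> carrier_mat n n"
    using PQ(1) n' by auto
  have "sum_list (map fst n_as) = length n_as" using one by (induct n_as) auto
  hence len: "length n_as = n" using carrier_matD(1)[OF Jc] by simp
  define d where "d j = snd (n_as ! j)" for j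
  have "A * Pm = Pm * ?J * (Q * Pm)"
    unfolding PQ(3) using Pc Jc Qc by (simp add: assoc_mult_mat[of _ n n _ n _ n])
  hence "A * Pm = Pm * ?J" unfolding PQ(2) n' using right_mult_one_mat[OF mult_carrier_mat[OF Pc Jc]] by simp
  moreover have "?J = mat n n (\<lambda>(i,j). if i = j then d i else 0)"
    unfolding jordan_matrix_diagonal[OF one] len d_def ..
  moreover have "mset (eigs A) = mset (map d [0..<n])"
  proof -
    have "char_poly A = (\<Prod>(s, a)\<leftarrow>n_as. [:- a, 1:] ^ s)"
      unfolding char_poly_similar[OF sim] by (rule jordan_matrix_char_poly)
    also have "\<dots> = (\<Prod>a\<leftarrow>map snd n_as. [:- a, 1:])" using one by (induct n_as) auto
    also have "map snd n_as = map d [0..<n]" unfolding d_def using len by (intro nth_equalityI) auto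
    finally show ?thesis unfolding eigs_def by (simp only: proots_prod_linear mset_sorted_list_of_multiset)
  qed
  ultimately show ?thesis using that Pc Qc PQ(2) n' by simp
qed

text \<open>Vectors of \<open>\<real>\<^sup>n\<close> are represented by functions \<open>nat \<Rightarrow> real\<close>, of which only the
  values below \<open>n\<close> matter; families of vectors are indexed by arbitrary finite sets.\<close>

definition dot :: "nat \<Rightarrow> (nat \<Rightarrow> real) \<Rightarrow> (nat \<Rightarrow> real) \<Rightarrow> real" where
  "dot n x y = (\<Sum>i<n. x i * y i)"

definition matvec :: "nat \<Rightarrow> real mat \<Rightarrow> (nat \<Rightarrow> real) \<Rightarrow> nat \<Rightarrow> real" where
  "matvec n A x i = (\<Sum>l<n. A $$ (i,l) * x l)"

definition lin_comb :: "'k set \<Rightarrow> ('k \<Rightarrow> real) \<Rightarrow> ('k \<Rightarrow> nat \<Rightarrow> real) \<Rightarrow> nat \<Rightarrow> real" where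
  "lin_comb K c v i = (\<Sum>k\<in>K. c k * v k i)"

definition lin_indep :: "nat \<Rightarrow> 'k set \<Rightarrow> ('k \<Rightarrow> nat \<Rightarrow> real) \<Rightarrow> bool" where
  "lin_indep n K v \<longleftrightarrow> (\<forall>c. (\<forall>i<n. lin_comb K c v i = 0) \<longrightarrow> (\<forall>k\<in>K. c k = 0))"

definition nonzero_on :: "nat \<Rightarrow> (nat \<Rightarrow> real) \<Rightarrow> bool" where
  "nonzero_on n x \<longleftrightarrow> (\<exists>i<n. x i \<noteq> 0)"

definition eigen_eq :: "nat \<Rightarrow> real mat \<Rightarrow> real \<Rightarrow> (nat \<Rightarrow> real) \<Rightarrow> bool" where
  "eigen_eq n A \<mu> x \<longleftrightarrow> (\<forall>i<n. matvec n A x i = \<mu> * x i)"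

definition eigenbasis :: "nat \<Rightarrow> real mat \<Rightarrow> (nat \<Rightarrow> nat \<Rightarrow> real) \<Rightarrow> (nat \<Rightarrow> real) \<Rightarrow> bool" where
  "eigenbasis n A P d \<longleftrightarrow> (\<forall>j<n. eigen_eq n A (d j) (P j)) \<and> lin_indep n {..<n} P"

theorem symmetric_mat_eigenbasis:
  assumes S: "symmetric_mat n A"
  obtains P d where "eigenbasis n A P d" and "mset (eigs A) = mset (map d [0..<n])"
proof -
  obtain Pm Q d where Pc: "Pm \<in> carrier_mat n n" and Qc: "Q \<in> carrier_mat n n"
    and QP: "Q * Pm = 1\<^sub>m n" and AP: "A * Pm = Pm * mat n n (\<lambda>(i,j). if i = j then d i else 0)"
    and eigs: "mset (eigs A) = mset (map d [0..<n])"
    by (rule symmetric_mat_diagonalizable[OF S])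
  have A: "A \<in> carrier_mat n n" using S by (rule symmetric_mat_carrier)
  define P where "P j i = Pm $$ (i,j)" for j i
  have "eigen_eq n A (d j) (P j)" if j: "j < n" for j
    unfolding eigen_eq_def
  proof (intro allI impI)
    fix i assume i: "i < n"
    have "matvec n A (P j) i = (A * Pm) $$ (i,j)"
      using A Pc i j by (auto simp: matvec_def scalar_prod_def P_def lessThan_atLeast0 intro!: sum.cong)
    also have "\<dots> = (\<Sum>l\<in>{0..<n}. Pm $$ (i,l) * (if l = j then d l else 0))"
      unfolding AP using Pc i j by (auto simp: scalar_prod_def intro!: sum.cong)
    also have "\<dots> = d j * P j i" using j by (simp add: if_distrib P_def cong: if_cong)
    finally show "matvec n A (P j) i = d j * P j i" .
  qed
  moreover have "lin_indep n {..<n} P"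
    unfolding lin_indep_def
  proof (intro allI impI)
    fix c assume c: "\<forall>i<n. lin_comb {..<n} c P i = 0"
    let ?v = "vec n c"
    have "Pm *\<^sub>v ?v = 0\<^sub>v n"
      using Pc c by (intro eq_vecI) (auto simp: scalar_prod_def P_def lin_comb_def lessThan_atLeast0 mult.commute)
    hence "Q *\<^sub>v (Pm *\<^sub>v ?v) = 0\<^sub>v n" using Qc by (intro eq_vecI) (auto simp: scalar_prod_def)
    hence "?v = 0\<^sub>v n" using Qc Pc QP by (simp add: assoc_mult_mat_vec[symmetric, of _ n n _ n])
    thus "\<forall>k\<in>{..<n}. c k = 0" by (metis index_vec index_zero_vec(1) lessThan_iff)
  qed
  ultimately show ?thesis using that eigs unfolding eigenbasis_def by blast
qed

section \<open>Counting eigenvalues\<close>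

lemma matvec_lin_comb: "matvec n A (lin_comb K c v) i = (\<Sum>k\<in>K. c k * matvec n A (v k) i)"
  unfolding matvec_def lin_comb_def by (simp add: sum_distrib_left sum.swap[of _ K] algebra_simps)

lemma eigen_eq_lin_comb:
  assumes "\<forall>k\<in>K. eigen_eq n A \<mu> (v k)"
  shows "eigen_eq n A \<mu> (lin_comb K c v)"
  unfolding eigen_eq_def
proof (intro allI impI)
  fix i assume i: "i < n"
  have "matvec n A (lin_comb K c v) i = (\<Sum>k\<in>K. c k * (\<mu> * v k i))"
    unfolding matvec_lin_comb using assms i unfolding eigen_eq_def by (intro sum.cong) auto
  thus "matvec n A (lin_comb K c v) i = \<mu> * lin_comb K c v i"
    unfolding lin_comb_def by (simp add: sum_distrib_left algebra_simps)
qed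

lemma lin_indep_subset:
  assumes ind: "lin_indep n K v" and JK: "J \<subseteq> K" and K: "finite K"
  shows "lin_indep n J v"
  unfolding lin_indep_def
proof (intro allI impI)
  fix c assume c: "\<forall>i<n. lin_comb J c v i = 0"
  define c' where "c' k = (if k \<in> J then c k else 0)" for k
  have "lin_comb K c' v i = lin_comb J c v i" for i
    unfolding lin_comb_def c'_def using JK K by (intro sum.mono_neutral_cong_right) auto
  hence "\<forall>k\<in>K. c' k = 0" using ind c unfolding lin_indep_def by metis
  thus "\<forall>k\<in>J. c k = 0" using JK unfolding c'_def by fastforce
qed

lemma eigenbasis_lin_indep: "eigenbasis n A P d \<Longrightarrow> J \<subseteq> {..<n} \<Longrightarrow> lin_indep n J P"
  unfolding eigenbasis_def by (auto intro: lin_indep_subset)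

lemma lin_indep_card_le:
  assumes K: "finite K" and ind: "lin_indep n K v"
  shows "card K \<le> n"
proof (rule ccontr)
  assume "\<not> card K \<le> n"
  hence nm: "n < card K" by simp
  let ?m = "card K"
  obtain h where h: "bij_betw h {0..<?m} K" using ex_bij_betw_nat_finite[OF K] by blast
  \<comment> \<open>the \<open>m \<times> m\<close> matrix with columns \<open>v (h j)\<close>, padded by zero rows, is singular\<close>
  define M where "M = mat ?m ?m (\<lambda>(i,j). if i < n then v (h j) i else 0)"
  have M: "M \<in> carrier_mat ?m ?m" unfolding M_def by simp
  have "transpose_mat M *\<^sub>v unit_vec ?m n = 0\<^sub>v ?m"
    using nm M by (intro eq_vecI) (auto simp: scalar_prod_right_unit M_def)
  moreover have "unit_vec ?m n \<noteq> (0\<^sub>v ?m :: real vec)"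
    using nm by (metis index_unit_vec(1) index_zero_vec(1) zero_neq_one)
  ultimately have "det (transpose_mat M) = 0"
    using det_0_iff_vec_prod_zero_field[of "transpose_mat M" ?m] M by (meson transpose_carrier_mat unit_vec_carrier)
  hence "det M = 0" using det_transpose[OF M] by simp
  then obtain w where w: "w \<in> carrier_vec ?m" "w \<noteq> 0\<^sub>v ?m" "M *\<^sub>v w = 0\<^sub>v ?m"
    using det_0_iff_vec_prod_zero_field[OF M] by auto
  define c where "c k = w $ the_inv_into {0..<?m} h k" for k
  have inv: "the_inv_into {0..<?m} h (h j) = j" if "j < ?m" for j
    using h that by (simp add: bij_betw_def the_inv_into_f_f)
  have "lin_comb K c v i = 0" if i: "i < n" for i
  proof -
    have "lin_comb K c v i = (\<Sum>j\<in>{0..<?m}. c (h j) * v (h j) i)"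
      unfolding lin_comb_def by (rule sum.reindex_bij_betw[OF h, symmetric])
    also have "\<dots> = (M *\<^sub>v w) $ i"
      using i nm w(1) unfolding M_def c_def
      by (auto simp: scalar_prod_def inv mult.commute intro!: sum.cong)
    finally show ?thesis using w(3) i nm by simp
  qed
  hence "\<forall>k\<in>K. c k = 0" using ind unfolding lin_indep_def by blast
  hence "w $ j = 0" if "j < ?m" for j
    using that h inv[of j] unfolding c_def by (metis atLeastLessThan_iff bij_betwE zero_le)
  hence "w = 0\<^sub>v ?m" using w(1) by (intro eq_vecI) auto
  thus False using w(2) by contradiction
qed

lemma lin_comb_common_nonzero:
  fixes x :: "'a \<Rightarrow> nat \<Rightarrow> real" and y :: "'b \<Rightarrow> nat \<Rightarrow> real"
  assumes I: "finite I" and J: "finite J" and card: "n < card I + card J"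
    and ix: "lin_indep n I x" and iy: "lin_indep n J y"
  obtains a b where "nonzero_on n (lin_comb I a x)" and "\<forall>i<n. lin_comb I a x i = lin_comb J b y i"
proof -
  define v where "v = case_sum x (\<lambda>k i. - y k i)"
  have "\<not> lin_indep n (I <+> J) v"
    using lin_indep_card_le[of "I <+> J" n v] card I J by (auto simp: card_Plus)
  then obtain c where c0: "\<forall>i<n. lin_comb (I <+> J) c v i = 0" and c: "\<exists>k\<in>I <+> J. c k \<noteq> 0"
    unfolding lin_indep_def by blast
  define a where "a k = c (Inl k)" for k
  define b where "b k = c (Inr k)" for k
  have split: "lin_comb (I <+> J) c v i = lin_comb I a x i - lin_comb J b y i" for i
    unfolding lin_comb_def sum.Plus[OF I J] by (simp add: a_def b_def v_def sum_negf)
  hence eq: "\<forall>i<n. lin_comb I a x i = lin_comb J b y i" using c0 by simp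
  have "nonzero_on n (lin_comb I a x)"
  proof (rule ccontr)
    assume "\<not> nonzero_on n (lin_comb I a x)"
    hence "\<forall>i<n. lin_comb I a x i = 0" "\<forall>i<n. lin_comb J b y i = 0"
      using eq unfolding nonzero_on_def by auto
    hence "\<forall>k\<in>I. a k = 0" "\<forall>k\<in>J. b k = 0" using ix iy unfolding lin_indep_def by blast+
    thus False using c unfolding a_def b_def by auto
  qed
  with eq that show ?thesis by blast
qed

definition eig_count :: "real mat \<Rightarrow> (real \<Rightarrow> bool) \<Rightarrow> nat" where
  "eig_count A Q = length (filter Q (eigs A))"

lemma eig_count_eigenbasis:
  assumes "mset (eigs A) = mset (map d [0..<n])"
  shows "eig_count A Q = card {j. j < n \<and> Q (d j)}"
proof -
  have "eig_count A Q = size (mset (filter Q (map d [0..<n])))"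
    unfolding eig_count_def size_mset[symmetric] mset_filter assms ..
  also have "\<dots> = card {j. j < n \<and> Q (d j)}"
    unfolding size_mset length_filter_conv_card by (intro arg_cong[where f = card]) auto
  finally show ?thesis .
qed

lemma symmetric_mat_eigenbasis_count:
  assumes "symmetric_mat n A"
  obtains P d where "eigenbasis n A P d" and "eig_count A = (\<lambda>Q. card {j. j < n \<and> Q (d j)})"
proof -
  obtain P d where B: "eigenbasis n A P d" and M: "mset (eigs A) = mset (map d [0..<n])"
    by (rule symmetric_mat_eigenbasis[OF assms])
  have "eig_count A = (\<lambda>Q. card {j. j < n \<and> Q (d j)})"
    by (rule ext) (rule eig_count_eigenbasis[OF M])
  with B show thesis by (rule that)
qed

lemma length_eigs:
  assumes "symmetric_mat n A"
  shows "length (eigs A) = n"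
proof -
  obtain P d where "mset (eigs A) = mset (map d [0..<n])" by (rule symmetric_mat_eigenbasis[OF assms])
  from mset_eq_length[OF this] show ?thesis by simp
qed

lemma eig_count_disj:
  "(\<And>x. \<not> (P x \<and> Q x)) \<Longrightarrow> eig_count A (\<lambda>x. P x \<or> Q x) = eig_count A P + eig_count A Q"
  unfolding eig_count_def by (induct ("eigs A")) auto

lemma eig_count_cong: "(\<And>x. P x \<longleftrightarrow> Q x) \<Longrightarrow> eig_count A P = eig_count A Q"
  unfolding eig_count_def by (rule arg_cong[where f = length], rule filter_cong) auto

lemma eig_count_le_split:
  shows "eig_count A (\<lambda>x. x \<le> c) = eig_count A (\<lambda>x. x < c) + eig_count A (\<lambda>x. x = c)"
    and "eig_count A (\<lambda>x. c \<le> x) = eig_count A (\<lambda>x. c < x) + eig_count A (\<lambda>x. x = c)"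
proof -
  have "eig_count A (\<lambda>x. x \<le> c) = eig_count A (\<lambda>x. x < c \<or> x = c)" by (rule eig_count_cong) auto
  also have "\<dots> = eig_count A (\<lambda>x. x < c) + eig_count A (\<lambda>x. x = c)" by (rule eig_count_disj) auto
  finally show "eig_count A (\<lambda>x. x \<le> c) = eig_count A (\<lambda>x. x < c) + eig_count A (\<lambda>x. x = c)" .
  have "eig_count A (\<lambda>x. c \<le> x) = eig_count A (\<lambda>x. c < x \<or> x = c)" by (rule eig_count_cong) auto
  also have "\<dots> = eig_count A (\<lambda>x. c < x) + eig_count A (\<lambda>x. x = c)" by (rule eig_count_disj) auto
  finally show "eig_count A (\<lambda>x. c \<le> x) = eig_count A (\<lambda>x. c < x) + eig_count A (\<lambda>x. x = c)" .
qed

lemma eig_count_eq_0: "c \<notin> set (eigs A) \<Longrightarrow> eig_count A (\<lambda>x. x = c) = 0"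
  unfolding eig_count_def by (auto simp: filter_empty_conv)

lemma eig_count_partition:
  "length (eigs A) = eig_count A (\<lambda>x. x < -1) + eig_count A (\<lambda>x. x = -1)
     + eig_count A (\<lambda>x. -1 < x \<and> x < 0) + eig_count A (\<lambda>x. x = 0) + eig_count A (\<lambda>x. 0 < x)"
proof -
  have "length L = length (filter (\<lambda>x. x < -1) L) + length (filter (\<lambda>x. x = -1) L)
     + length (filter (\<lambda>x. -1 < x \<and> x < 0) L) + length (filter (\<lambda>x. x = 0) L)
     + length (filter (\<lambda>x. 0 < x) L)" for L :: "real list"
    by (induct L) auto
  thus ?thesis unfolding eig_count_def .
qed

lemma eig_mult_eq_eig_count:
  assumes "A \<in> carrier_mat n n"
  shows "eig_mult x A = eig_count A (\<lambda>y. y = x)"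
proof -
  have "char_poly A \<noteq> 0" using degree_monic_char_poly[OF assms] by auto
  hence "eig_mult x A = count (mset (eigs A)) x" unfolding eig_mult_def eigs_def by simp
  also have "\<dots> = length (filter ((=) x) (eigs A))"
    by (simp add: count_mset count_list_eq_length_filter)
  also have "\<dots> = length (filter (\<lambda>y. y = x) (eigs A))"
    by (rule arg_cong[where f = length], rule filter_cong) auto
  finally show ?thesis unfolding eig_count_def .
qed

lemma nontriv_neg_eq_eig_count:
  "nontriv_neg A = eig_count A (\<lambda>x. x < -1) + eig_count A (\<lambda>x. -1 < x \<and> x < 0)"
proof -
  have "nontriv_neg A = eig_count A (\<lambda>x. x < -1 \<or> (-1 < x \<and> x < 0))"
    unfolding nontriv_neg_def eig_count_def by (rule arg_cong[where f = length], rule filter_cong) auto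
  thus ?thesis by (simp add: eig_count_disj)
qed

lemma nontriv_pos_eq_eig_count: "nontriv_pos A = eig_count A (\<lambda>x. 0 < x)"
  unfolding nontriv_pos_def eig_count_def ..

lemma inertia_eq_eig_count:
  "inertia A = (eig_count A (\<lambda>x. x < -1) + eig_count A (\<lambda>x. x = -1) + eig_count A (\<lambda>x. -1 < x \<and> x < 0),
     eig_count A (\<lambda>x. x = 0), eig_count A (\<lambda>x. 0 < x))"
proof -
  have "eig_count A (\<lambda>x. x < 0) = eig_count A (\<lambda>x. x < -1 \<or> (x = -1 \<or> (-1 < x \<and> x < 0)))"
    by (rule eig_count_cong) auto
  also have "\<dots> = eig_count A (\<lambda>x. x < -1) + eig_count A (\<lambda>x. x = -1) + eig_count A (\<lambda>x. -1 < x \<and> x < 0)"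
    by (subst eig_count_disj, force, subst eig_count_disj, force) simp
  finally show ?thesis unfolding inertia_def eig_count_def by simp
qed

lemma card_lessThan_split: "card {j. j < n \<and> P j} + card {j. j < n \<and> \<not> P j} = n"
proof -
  have "card {..<n} = card ({..<n} \<inter> Collect P) + card ({..<n} - Collect P)"
    by (rule card_Int_Diff) simp
  also have "{..<n} \<inter> Collect P = {j. j < n \<and> P j}" by auto
  also have "{..<n} - Collect P = {j. j < n \<and> \<not> P j}" by auto
  finally show ?thesis by simp
qed

lemma eigenvectors_card_le_eig_count:
  assumes S: "symmetric_mat n A" and K: "finite K" and iK: "lin_indep n K y"
    and ev: "\<forall>k\<in>K. eigen_eq n A e (y k)"
  shows "card K \<le> eig_count A (\<lambda>x. x = e)"
proof -
  obtain P d where B: "eigenbasis n A P d" and cnt: "eig_count A = (\<lambda>Q. card {j. j < n \<and> Q (d j)})"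
    by (rule symmetric_mat_eigenbasis_count[OF S])
  define J where "J = {j. j < n \<and> d j \<noteq> e}"
  have iJ: "lin_indep n J P" by (rule eigenbasis_lin_indep[OF B]) (auto simp: J_def)
  have "card {j. j < n \<and> d j = e} + card J = n" unfolding J_def by (rule card_lessThan_split)
  moreover have "\<not> n < card K + card J"
  proof
    assume "n < card K + card J"
    \<comment> \<open>a nonzero \<open>e\<close>-eigenvector in the span of the eigenvectors for eigenvalues \<open>\<noteq> e\<close>\<close>
    then obtain a b where nz: "nonzero_on n (lin_comb K a y)"
      and eq: "\<forall>i<n. lin_comb K a y i = lin_comb J b P i"
      using lin_comb_common_nonzero[OF K _ _ iK iJ] unfolding J_def by auto
    have "\<forall>i<n. lin_comb J (\<lambda>j. b j * (d j - e)) P i = 0"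
    proof (intro allI impI)
      fix i assume i: "i < n"
      have "matvec n A (lin_comb J b P) i = matvec n A (lin_comb K a y) i"
        using eq unfolding matvec_def by (intro sum.cong) auto
      also have "\<dots> = e * lin_comb J b P i"
        using eigen_eq_lin_comb[OF ev] eq i unfolding eigen_eq_def by simp
      finally have "(\<Sum>j\<in>J. b j * (d j * P j i)) = e * lin_comb J b P i"
        unfolding matvec_lin_comb using B i unfolding eigenbasis_def eigen_eq_def J_def by simp
      thus "lin_comb J (\<lambda>j. b j * (d j - e)) P i = 0"
        unfolding lin_comb_def by (simp add: sum_distrib_left sum_subtractf algebra_simps)
    qed
    hence "\<forall>j\<in>J. b j = 0" using iJ unfolding lin_indep_def J_def by fastforce
    thus False using nz eq unfolding nonzero_on_def lin_comb_def by auto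
  qed
  ultimately show ?thesis unfolding cnt using lin_indep_card_le[OF K] by simp
qed

lemma not_in_eigs_if_no_eigenvector:
  assumes A: "A \<in> carrier_mat n n" and no_eigvec: "\<And>x. eigen_eq n A \<mu> x \<Longrightarrow> \<not> nonzero_on n x"
  shows "\<mu> \<notin> set (eigs A)"
proof
  assume "\<mu> \<in> set (eigs A)"
  moreover have "char_poly A \<noteq> 0" using degree_monic_char_poly[OF A] by auto
  ultimately have "poly (char_poly A) \<mu> = 0" unfolding eigs_def by simp
  then obtain v where v: "v \<in> carrier_vec n" "v \<noteq> 0\<^sub>v n" and Av: "A *\<^sub>v v = \<mu> \<cdot>\<^sub>v v"
    using eigenvalue_root_char_poly[OF A] A unfolding eigenvalue_def eigenvector_def by auto
  have "eigen_eq n A \<mu> (\<lambda>i. v $ i)"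
    unfolding eigen_eq_def
  proof (intro allI impI)
    fix i assume i: "i < n"
    have "(A *\<^sub>v v) $ i = (\<mu> \<cdot>\<^sub>v v) $ i" using Av by simp
    thus "matvec n A (\<lambda>i. v $ i) i = \<mu> * v $ i"
      using i A v unfolding matvec_def by (auto simp: scalar_prod_def lessThan_atLeast0 intro!: sum.cong)
  qed
  moreover have "nonzero_on n (\<lambda>i. v $ i)"
    using v unfolding nonzero_on_def by (metis eq_vecI carrier_vecD index_zero_vec)
  ultimately show False using no_eigvec by blast
qed

section \<open>Rayleigh quotients and Cauchy interlacing\<close>

lemma dot_matvec_symmetric:
  assumes "symmetric_mat n A"
  shows "dot n (matvec n A u) w = dot n u (matvec n A w)"
proof -
  have "dot n (matvec n A u) w = (\<Sum>i<n. \<Sum>l<n. A $$ (i,l) * u l * w i)"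
    unfolding dot_def matvec_def by (simp add: sum_distrib_right)
  also have "\<dots> = (\<Sum>l<n. \<Sum>i<n. A $$ (i,l) * u l * w i)" by (rule sum.swap)
  also have "\<dots> = dot n u (matvec n A w)"
    unfolding dot_def matvec_def sum_distrib_left using assms unfolding symmetric_mat_def
    by (intro sum.cong refl) (simp add: ac_simps)
  finally show ?thesis .
qed

lemma eigen_eq_orthogonal:
  assumes S: "symmetric_mat n A" and u: "eigen_eq n A \<alpha> u" and w: "eigen_eq n A \<beta> w"
    and "\<alpha> \<noteq> \<beta>"
  shows "dot n u w = 0"
proof -
  have "\<alpha> * dot n u w = dot n (matvec n A u) w"
    using u unfolding dot_def eigen_eq_def by (simp add: sum_distrib_left algebra_simps)
  also have "\<dots> = dot n u (matvec n A w)" by (rule dot_matvec_symmetric[OF S])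
  also have "\<dots> = \<beta> * dot n u w"
    using w unfolding dot_def eigen_eq_def by (simp add: sum_distrib_left algebra_simps)
  finally show ?thesis using \<open>\<alpha> \<noteq> \<beta>\<close> by simp
qed

lemma dot_sum_sum:
  "dot n (\<lambda>i. \<Sum>\<mu>\<in>M. g \<mu> i) (\<lambda>i. \<Sum>\<nu>\<in>N. h \<nu> i) = (\<Sum>\<mu>\<in>M. \<Sum>\<nu>\<in>N. dot n (g \<mu>) (h \<nu>))"
proof -
  have "dot n (\<lambda>i. \<Sum>\<mu>\<in>M. g \<mu> i) (\<lambda>i. \<Sum>\<nu>\<in>N. h \<nu> i) = (\<Sum>i<n. \<Sum>\<mu>\<in>M. \<Sum>\<nu>\<in>N. g \<mu> i * h \<nu> i)"
    unfolding dot_def sum_product ..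
  also have "\<dots> = (\<Sum>\<mu>\<in>M. \<Sum>i<n. \<Sum>\<nu>\<in>N. g \<mu> i * h \<nu> i)" by (rule sum.swap)
  also have "\<dots> = (\<Sum>\<mu>\<in>M. \<Sum>\<nu>\<in>N. \<Sum>i<n. g \<mu> i * h \<nu> i)" by (intro sum.cong refl sum.swap)
  finally show ?thesis unfolding dot_def .
qed

lemma dot_self_nonneg: "0 \<le> dot n x x"
  unfolding dot_def by (intro sum_nonneg) auto

lemma dot_self_pos: "nonzero_on n x \<Longrightarrow> 0 < dot n x x"
  unfolding dot_def nonzero_on_def by (elim exE conjE, rule sum_pos2) (auto simp: zero_less_mult_iff)

text \<open>Eigenvectors for distinct eigenvalues are orthogonal, so both forms diagonalise.\<close>

lemma quadratic_forms_eigen_sum: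
  assumes S: "symmetric_mat n A" and M: "finite M"
    and ev: "\<forall>\<mu>\<in>M. eigen_eq n A \<mu> (f \<mu>)"
  defines "X \<equiv> (\<lambda>i. \<Sum>\<mu>\<in>M. f \<mu> i)"
  shows "dot n X (matvec n A X) = (\<Sum>\<mu>\<in>M. \<mu> * dot n (f \<mu>) (f \<mu>))"
    and "dot n X X = (\<Sum>\<mu>\<in>M. dot n (f \<mu>) (f \<mu>))"
proof -
  have orth: "dot n (f \<mu>) (f \<nu>) = 0" if "\<mu> \<in> M" "\<nu> \<in> M" "\<mu> \<noteq> \<nu>" for \<mu> \<nu>
    using eigen_eq_orthogonal[OF S] ev that by blast
  have diag: "(\<Sum>\<nu>\<in>M. c \<nu> * dot n (f \<mu>) (f \<nu>)) = c \<mu> * dot n (f \<mu>) (f \<mu>)" if "\<mu> \<in> M" for c \<mu>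
    using orth that by (subst sum.remove[OF M that], subst sum.neutral) auto
  have "matvec n A X i = (\<Sum>\<nu>\<in>M. \<nu> * f \<nu> i)" if "i < n" for i
  proof -
    have "matvec n A X i = (\<Sum>\<nu>\<in>M. matvec n A (f \<nu>) i)"
      unfolding matvec_def X_def by (simp add: sum_distrib_left sum.swap[of _ M])
    thus ?thesis using ev that unfolding eigen_eq_def by simp
  qed
  hence "dot n X (matvec n A X) = dot n X (\<lambda>i. \<Sum>\<nu>\<in>M. \<nu> * f \<nu> i)"
    unfolding dot_def by simp
  also have "\<dots> = (\<Sum>\<mu>\<in>M. \<Sum>\<nu>\<in>M. \<nu> * dot n (f \<mu>) (f \<nu>))"
    unfolding X_def dot_sum_sum by (simp add: dot_def sum_distrib_left algebra_simps)
  also have "\<dots> = (\<Sum>\<mu>\<in>M. \<mu> * dot n (f \<mu>) (f \<mu>))"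
    using diag[of _ "\<lambda>\<nu>. \<nu>"] by simp
  finally show "dot n X (matvec n A X) = (\<Sum>\<mu>\<in>M. \<mu> * dot n (f \<mu>) (f \<mu>))" .
  show "dot n X X = (\<Sum>\<mu>\<in>M. dot n (f \<mu>) (f \<mu>))"
    unfolding X_def dot_sum_sum using diag[of _ "\<lambda>_. 1"] by simp
qed

definition order_convex :: "(real \<Rightarrow> bool) \<Rightarrow> bool" where
  "order_convex Q \<longleftrightarrow> (\<forall>x y z. Q x \<longrightarrow> Q z \<longrightarrow> x \<le> y \<longrightarrow> y \<le> z \<longrightarrow> Q y)"

definition half_line :: "(real \<Rightarrow> bool) \<Rightarrow> bool" where
  "half_line Q \<longleftrightarrow> order_convex Q \<and> order_convex (\<lambda>x. \<not> Q x)"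

lemma half_line_intros:
  "half_line (\<lambda>x. x < r)" "half_line (\<lambda>x. x \<le> r)" "half_line (\<lambda>x. r < x)" "half_line (\<lambda>x. r \<le> x)"
  unfolding half_line_def order_convex_def by auto

lemma order_convex_weighted_mean:
  fixes v q :: "'a \<Rightarrow> real"
  assumes M: "finite M" and Q: "order_convex Q" and QM: "\<forall>m\<in>M. Q (v m)"
    and q: "\<forall>m\<in>M. 0 \<le> q m" and pos: "0 < (\<Sum>m\<in>M. q m)"
  shows "Q ((\<Sum>m\<in>M. v m * q m) / (\<Sum>m\<in>M. q m))"
proof -
  define M' where "M' = {m\<in>M. 0 < q m}"
  have fin: "finite M'" using M by (simp add: M'_def)
  have sq: "(\<Sum>m\<in>M. q m) = (\<Sum>m\<in>M'. q m)" and svq: "(\<Sum>m\<in>M. v m * q m) = (\<Sum>m\<in>M'. v m * q m)"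
    by (rule sum.mono_neutral_right; use M q in \<open>force simp: M'_def\<close>)+
  have "M' \<noteq> {}" using pos sq by auto
  define lo hi where "lo = Min (v ` M')" and "hi = Max (v ` M')"
  have "lo \<in> v ` M'" "hi \<in> v ` M'" using fin \<open>M' \<noteq> {}\<close> unfolding lo_def hi_def by auto
  hence "Q lo" "Q hi" using QM unfolding M'_def by auto
  have "lo * (\<Sum>m\<in>M'. q m) \<le> (\<Sum>m\<in>M'. v m * q m)"
    unfolding sum_distrib_left using fin by (intro sum_mono mult_right_mono) (auto simp: lo_def M'_def)
  moreover have "(\<Sum>m\<in>M'. v m * q m) \<le> hi * (\<Sum>m\<in>M'. q m)"
    unfolding sum_distrib_left using fin by (intro sum_mono mult_right_mono) (auto simp: hi_def M'_def)
  ultimately have "lo \<le> (\<Sum>m\<in>M. v m * q m) / (\<Sum>m\<in>M. q m)"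
    "(\<Sum>m\<in>M. v m * q m) / (\<Sum>m\<in>M. q m) \<le> hi"
    using pos unfolding sq svq by (simp_all add: le_divide_eq divide_le_eq)
  thus ?thesis using Q \<open>Q lo\<close> \<open>Q hi\<close> unfolding order_convex_def by blast
qed

definition rayleigh :: "nat \<Rightarrow> real mat \<Rightarrow> (nat \<Rightarrow> real) \<Rightarrow> real" where
  "rayleigh n A x = dot n x (matvec n A x) / dot n x x"

lemma rayleigh_cong: "(\<And>i. i < n \<Longrightarrow> x i = y i) \<Longrightarrow> rayleigh n A x = rayleigh n A y"
  unfolding rayleigh_def dot_def matvec_def by simp

text \<open>The Rayleigh quotient of a combination of eigenvectors is a weighted mean of their eigenvalues.\<close>

lemma rayleigh_eigen_span:
  assumes S: "symmetric_mat n A" and B: "eigenbasis n A P d" and J: "J \<subseteq> {..<n}"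
    and Q: "order_convex Q" and QJ: "\<forall>j\<in>J. Q (d j)" and nz: "nonzero_on n (lin_comb J c P)"
  shows "Q (rayleigh n A (lin_comb J c P))"
proof -
  have fin: "finite J" using J finite_subset by blast
  define part where "part \<mu> = lin_comb {j\<in>J. d j = \<mu>} c P" for \<mu>
  have x: "lin_comb J c P = (\<lambda>i. \<Sum>\<mu>\<in>d ` J. part \<mu> i)"
    unfolding part_def lin_comb_def by (intro ext, rule sum.group[OF fin, symmetric]) (auto simp: fin)
  have "\<forall>\<mu>\<in>d ` J. eigen_eq n A \<mu> (part \<mu>)"
    unfolding part_def using B J by (auto intro!: eigen_eq_lin_comb simp: eigenbasis_def)
  note forms = quadratic_forms_eigen_sum[OF S finite_imageI[OF fin] this, folded x]
  have pos: "0 < (\<Sum>\<mu>\<in>d ` J. dot n (part \<mu>) (part \<mu>))"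
    using dot_self_pos[OF nz] unfolding forms(2) .
  have "Q ((\<Sum>\<mu>\<in>d ` J. \<mu> * dot n (part \<mu>) (part \<mu>)) / (\<Sum>\<mu>\<in>d ` J. dot n (part \<mu>) (part \<mu>)))"
    by (rule order_convex_weighted_mean[OF _ Q _ _ pos]) (use fin QJ dot_self_nonneg in auto)
  thus ?thesis unfolding rayleigh_def forms .
qed

definition principal_submatrix :: "(nat \<Rightarrow> nat) \<Rightarrow> nat \<Rightarrow> 'a mat \<Rightarrow> nat \<Rightarrow> 'a mat \<Rightarrow> bool" where
  "principal_submatrix \<sigma> m B n A \<longleftrightarrow> inj_on \<sigma> {..<m} \<and> \<sigma> ` {..<m} \<subseteq> {..<n}
     \<and> (\<forall>a<m. \<forall>b<m. B $$ (a,b) = A $$ (\<sigma> a, \<sigma> b))"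

definition extend_by_zero :: "nat \<Rightarrow> (nat \<Rightarrow> nat) \<Rightarrow> (nat \<Rightarrow> real) \<Rightarrow> nat \<Rightarrow> real" where
  "extend_by_zero m \<sigma> y i = (if i \<in> \<sigma> ` {..<m} then y (the_inv_into {..<m} \<sigma> i) else 0)"

lemma extend_by_zero_outside: "i \<notin> \<sigma> ` {..<m} \<Longrightarrow> extend_by_zero m \<sigma> y i = 0"
  unfolding extend_by_zero_def by simp

lemma lin_comb_extend_by_zero:
  "lin_comb I c (\<lambda>j. extend_by_zero m \<sigma> (P j)) i = extend_by_zero m \<sigma> (lin_comb I c P) i"
  unfolding lin_comb_def extend_by_zero_def by auto

context
  fixes \<sigma> :: "nat \<Rightarrow> nat" and m n :: nat
  assumes inj: "inj_on \<sigma> {..<m}" and into: "\<sigma> ` {..<m} \<subseteq> {..<n}"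
begin

lemma extend_by_zero_at: "a < m \<Longrightarrow> extend_by_zero m \<sigma> y (\<sigma> a) = y a"
  unfolding extend_by_zero_def using inj by (auto simp: the_inv_into_f_f)

lemma sum_extend_by_zero:
  assumes "\<And>i. i < n \<Longrightarrow> i \<notin> \<sigma> ` {..<m} \<Longrightarrow> f i = 0"
  shows "(\<Sum>i<n. f i) = (\<Sum>a<m. f (\<sigma> a))"
proof -
  have "(\<Sum>i<n. f i) = (\<Sum>i\<in>\<sigma> ` {..<m}. f i)"
    by (rule sum.mono_neutral_right) (use into assms in auto)
  also have "\<dots> = (\<Sum>a<m. f (\<sigma> a))" by (simp add: sum.reindex[OF inj])
  finally show ?thesis .
qed

lemma rayleigh_extend_by_zero:
  assumes "\<forall>a<m. \<forall>b<m. B $$ (a,b) = A $$ (\<sigma> a, \<sigma> b)"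
  shows "rayleigh n A (extend_by_zero m \<sigma> y) = rayleigh m B y"
proof -
  have "matvec n A (extend_by_zero m \<sigma> y) (\<sigma> a) = matvec m B y a" if "a < m" for a
    unfolding matvec_def using that assms
    by (subst sum_extend_by_zero) (auto simp: extend_by_zero_outside extend_by_zero_at)
  thus ?thesis unfolding rayleigh_def dot_def
    by (subst (1 2) sum_extend_by_zero) (auto simp: extend_by_zero_outside extend_by_zero_at)
qed

lemma lin_indep_extend_by_zero:
  assumes "lin_indep m I P"
  shows "lin_indep n I (\<lambda>j. extend_by_zero m \<sigma> (P j))"
  unfolding lin_indep_def
proof (intro allI impI)
  fix c assume c: "\<forall>i<n. lin_comb I c (\<lambda>j. extend_by_zero m \<sigma> (P j)) i = 0"
  have "lin_comb I c P a = 0" if "a < m" for a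
    using c[rule_format, of "\<sigma> a"] into that
    by (auto simp: lin_comb_extend_by_zero extend_by_zero_at)
  thus "\<forall>k\<in>I. c k = 0" using assms unfolding lin_indep_def by blast
qed

lemma nonzero_on_extend_by_zero:
  assumes "nonzero_on n (extend_by_zero m \<sigma> y)"
  shows "nonzero_on m y"
proof -
  obtain i where "extend_by_zero m \<sigma> y i \<noteq> 0" using assms unfolding nonzero_on_def by blast
  moreover from this obtain a where "a < m" "i = \<sigma> a"
    using extend_by_zero_outside by blast
  ultimately show ?thesis unfolding nonzero_on_def using extend_by_zero_at by auto
qed

lemma common_extended_vector:
  assumes BB: "eigenbasis m B PB dB" and BA: "eigenbasis n A PA dA"
    and I: "I \<subseteq> {..<m}" and J: "J \<subseteq> {..<n}" and card: "n < card I + card J"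
  obtains a b where "nonzero_on m (lin_comb I a PB)" and "nonzero_on n (lin_comb J b PA)"
    and "\<forall>i<n. extend_by_zero m \<sigma> (lin_comb I a PB) i = lin_comb J b PA i"
proof -
  have iI: "lin_indep n I (\<lambda>j. extend_by_zero m \<sigma> (PB j))"
    using eigenbasis_lin_indep[OF BB I] by (rule lin_indep_extend_by_zero)
  have iJ: "lin_indep n J PA" by (rule eigenbasis_lin_indep[OF BA J])
  have "finite I" "finite J" using I J by (auto intro: finite_subset)
  then obtain a b where nz: "nonzero_on n (lin_comb I a (\<lambda>j. extend_by_zero m \<sigma> (PB j)))"
    and eq: "\<forall>i<n. lin_comb I a (\<lambda>j. extend_by_zero m \<sigma> (PB j)) i = lin_comb J b PA i"
    using lin_comb_common_nonzero[OF _ _ card iI iJ] by blast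
  show thesis
  proof (rule that)
    show "nonzero_on m (lin_comb I a PB)"
      using nz unfolding lin_comb_extend_by_zero by (rule nonzero_on_extend_by_zero)
    show "nonzero_on n (lin_comb J b PA)" using nz eq unfolding nonzero_on_def by auto
    show "\<forall>i<n. extend_by_zero m \<sigma> (lin_comb I a PB) i = lin_comb J b PA i"
      using eq unfolding lin_comb_extend_by_zero .
  qed
qed

end

text \<open>A principal submatrix with more eigenvalues in a
  half-line than the whole matrix would give a nonzero vector spanned both by eigenvectors of
  \<open>B\<close> with eigenvalues inside and by eigenvectors of \<open>A\<close> with eigenvalues outside the
  half-line; its Rayleigh quotient would lie in both.\<close>

theorem interlacing_count:
  assumes SA: "symmetric_mat n A" and SB: "symmetric_mat m B"
    and sub: "principal_submatrix \<sigma> m B n A" and Q: "half_line Q"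
  shows "eig_count B Q \<le> eig_count A Q"
proof (rule ccontr)
  assume less: "\<not> ?thesis"
  obtain PA dA where BA: "eigenbasis n A PA dA" and cA: "eig_count A = (\<lambda>Q. card {j. j < n \<and> Q (dA j)})"
    by (rule symmetric_mat_eigenbasis_count[OF SA])
  obtain PB dB where BB: "eigenbasis m B PB dB" and cB: "eig_count B = (\<lambda>Q. card {j. j < m \<and> Q (dB j)})"
    by (rule symmetric_mat_eigenbasis_count[OF SB])
  have inj: "inj_on \<sigma> {..<m}" and into: "\<sigma> ` {..<m} \<subseteq> {..<n}"
    and entries: "\<forall>a<m. \<forall>b<m. B $$ (a,b) = A $$ (\<sigma> a, \<sigma> b)"
    using sub unfolding principal_submatrix_def by auto
  define I where "I = {j. j < m \<and> Q (dB j)}"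
  define J where "J = {j. j < n \<and> \<not> Q (dA j)}"
  have "n < card I + card J"
    using less card_lessThan_split[of n "\<lambda>j. Q (dA j)"] unfolding cA cB I_def J_def by linarith
  then obtain a b where nzB: "nonzero_on m (lin_comb I a PB)" and nzA: "nonzero_on n (lin_comb J b PA)"
    and ext: "\<forall>i<n. extend_by_zero m \<sigma> (lin_comb I a PB) i = lin_comb J b PA i"
    by (rule common_extended_vector[OF inj into BB BA, rotated 2]) (auto simp: I_def J_def)
  have "Q (rayleigh m B (lin_comb I a PB))"
    by (rule rayleigh_eigen_span[OF SB BB _ _ _ nzB]) (use Q in \<open>auto simp: half_line_def I_def\<close>)
  moreover have "\<not> Q (rayleigh n A (lin_comb J b PA))"
    by (rule rayleigh_eigen_span[OF SA BA _ _ _ nzA, where Q = "\<lambda>x. \<not> Q x"])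
      (use Q in \<open>auto simp: half_line_def J_def\<close>)
  moreover have "rayleigh m B (lin_comb I a PB) = rayleigh n A (lin_comb J b PA)"
    using rayleigh_extend_by_zero[OF inj into entries] rayleigh_cong[of n _ _ A] ext by metis
  ultimately show False by simp
qed

lemma principal_submatrix_dim_le: "principal_submatrix \<sigma> m B n A \<Longrightarrow> m \<le> n"
  unfolding principal_submatrix_def using card_mono[of "{..<n}" "\<sigma> ` {..<m}"]
  by (simp add: card_image)

lemma sorted_count_ge_Suc_index:
  fixes L :: "'a :: linorder list"
  assumes L: "sorted L" and down: "\<And>x y. x \<le> y \<Longrightarrow> Q y \<Longrightarrow> Q x"
    and i: "i < length L" and Qi: "Q (L ! i)"
  shows "Suc i \<le> length (filter Q L)"
proof -
  have "{..<Suc i} \<subseteq> {k. k < length L \<and> Q (L ! k)}"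
  proof
    fix k assume "k \<in> {..<Suc i}"
    hence "k \<le> i" by simp
    hence "L ! k \<le> L ! i" using sorted_nth_mono[OF L] i by blast
    thus "k \<in> {k. k < length L \<and> Q (L ! k)}" using down[OF _ Qi] \<open>k \<le> i\<close> i by simp
  qed
  from card_mono[OF _ this] show ?thesis by (simp add: length_filter_conv_card)
qed

lemma sorted_count_ge_length_minus_index:
  fixes L :: "'a :: linorder list"
  assumes L: "sorted L" and up: "\<And>x y. x \<le> y \<Longrightarrow> Q x \<Longrightarrow> Q y"
    and i: "i < length L" and Qi: "Q (L ! i)"
  shows "length L - i \<le> length (filter Q L)"
proof -
  have "{i..<length L} \<subseteq> {k. k < length L \<and> Q (L ! k)}"
  proof
    fix k assume "k \<in> {i..<length L}"
    hence "i \<le> k" "k < length L" by simp_all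
    hence "L ! i \<le> L ! k" using sorted_nth_mono[OF L] by blast
    thus "k \<in> {k. k < length L \<and> Q (L ! k)}" using up[OF _ Qi] \<open>k < length L\<close> by simp
  qed
  from card_mono[OF _ this] show ?thesis by (simp add: length_filter_conv_card)
qed

lemma sorted_nth_if_index_lt_count:
  fixes L :: "'a :: linorder list"
  assumes L: "sorted L" and down: "\<And>x y. x \<le> y \<Longrightarrow> Q y \<Longrightarrow> Q x"
    and i: "i < length (filter Q L)"
  shows "Q (L ! i)"
proof (rule ccontr)
  assume "\<not> Q (L ! i)"
  moreover have "i < length L" using i length_filter_le[of Q L] by linarith
  ultimately have "length L - i \<le> length (filter (\<lambda>x. \<not> Q x) L)"
    by (intro sorted_count_ge_length_minus_index[OF L, of "\<lambda>x. \<not> Q x"]) (use down in blast)+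
  thus False using i sum_length_filter_compl[of Q L] by linarith
qed

lemma sorted_nth_if_index_ge_count:
  fixes L :: "'a :: linorder list"
  assumes L: "sorted L" and up: "\<And>x y. x \<le> y \<Longrightarrow> Q x \<Longrightarrow> Q y"
    and i: "length L - length (filter Q L) \<le> i" "i < length L"
  shows "Q (L ! i)"
proof (rule ccontr)
  assume "\<not> Q (L ! i)"
  hence "Suc i \<le> length (filter (\<lambda>x. \<not> Q x) L)"
    using i by (intro sorted_count_ge_Suc_index[OF L, of "\<lambda>x. \<not> Q x"]) (use up in blast)+
  thus False using i sum_length_filter_compl[of Q L] by linarith
qed

theorem interlacing_eigs:
  fixes A B :: "real mat"
  assumes SA: "symmetric_mat n A" and SB: "symmetric_mat m B"
    and sub: "principal_submatrix \<sigma> m B n A" and i: "i < m"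
  shows "eigs A ! i \<le> eigs B ! i" and "eigs B ! i \<le> eigs A ! (n - m + i)"
proof -
  have lA: "length (eigs A) = n" and lB: "length (eigs B) = m"
    using length_eigs SA SB by blast+
  have sA: "sorted (eigs A)" and sB: "sorted (eigs B)" unfolding eigs_def by simp_all
  have "m \<le> n" by (rule principal_submatrix_dim_le[OF sub])
  let ?c = "eigs B ! i"
  have "Suc i \<le> eig_count B (\<lambda>x. x \<le> ?c)"
    unfolding eig_count_def by (rule sorted_count_ge_Suc_index[OF sB]) (use i lB in auto)
  also have "\<dots> \<le> eig_count A (\<lambda>x. x \<le> ?c)"
    by (rule interlacing_count[OF SA SB sub half_line_intros(2)])
  finally have "Suc i \<le> eig_count A (\<lambda>x. x \<le> ?c)" .
  thus "eigs A ! i \<le> ?c"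
    unfolding eig_count_def by (intro sorted_nth_if_index_lt_count[OF sA, of "\<lambda>x. x \<le> ?c"]) auto
  have "m - i \<le> eig_count B (\<lambda>x. ?c \<le> x)"
    unfolding eig_count_def using sorted_count_ge_length_minus_index[OF sB, of "\<lambda>x. ?c \<le> x" i] i lB
    by simp
  also have "\<dots> \<le> eig_count A (\<lambda>x. ?c \<le> x)"
    by (rule interlacing_count[OF SA SB sub half_line_intros(4)])
  finally have "m - i \<le> eig_count A (\<lambda>x. ?c \<le> x)" .
  thus "?c \<le> eigs A ! (n - m + i)"
    unfolding eig_count_def using \<open>m \<le> n\<close> i lA
    by (intro sorted_nth_if_index_ge_count[OF sA, of "\<lambda>x. ?c \<le> x"]) auto
qed

lemma interlaced_extreme_eigenvalues:
  fixes A B :: "real mat"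
  assumes SA: "symmetric_mat n A" and SB: "symmetric_mat m B" and sub: "principal_submatrix \<sigma> m B n A"
    and neg: "p \<le> eig_count B (\<lambda>x. x < -1)" and pos: "q \<le> eig_count B (\<lambda>x. 0 < x)"
    and m: "m = d + q"
  shows "\<forall>i\<in>{1..p}. eig A i \<le> eig B i \<and> eig B i < -1"
    and "\<forall>i\<in>{1..q}. 0 < eig B (d + i) \<and> eig B (d + i) \<le> eig A (n - q + i)"
proof -
  have lB: "length (eigs B) = m" by (rule length_eigs[OF SB])
  have sB: "sorted (eigs B)" unfolding eigs_def by simp
  have "m \<le> n" by (rule principal_submatrix_dim_le[OF sub])
  have "p \<le> m" using neg length_filter_le[of "\<lambda>x. x < -1" "eigs B"] lB unfolding eig_count_def by linarith
  show "\<forall>i\<in>{1..p}. eig A i \<le> eig B i \<and> eig B i < -1"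
  proof
    fix i assume i: "i \<in> {1..p}"
    hence "i - 1 < m" using \<open>p \<le> m\<close> by auto
    have "eigs A ! (i - 1) \<le> eigs B ! (i - 1)" by (rule interlacing_eigs(1)[OF SA SB sub \<open>i - 1 < m\<close>])
    moreover have "eigs B ! (i - 1) < -1"
      using neg i unfolding eig_count_def by (intro sorted_nth_if_index_lt_count[OF sB, of "\<lambda>x. x < -1"]) auto
    ultimately show "eig A i \<le> eig B i \<and> eig B i < -1" unfolding eig_def by simp
  qed
  show "\<forall>i\<in>{1..q}. 0 < eig B (d + i) \<and> eig B (d + i) \<le> eig A (n - q + i)"
  proof
    fix i assume i: "i \<in> {1..q}"
    hence j: "d + i - 1 < m" using m by auto
    have "0 < eigs B ! (d + i - 1)"
      using pos i m lB unfolding eig_count_def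
      by (intro sorted_nth_if_index_ge_count[OF sB, of "\<lambda>x. 0 < x"]) auto
    moreover have "eigs B ! (d + i - 1) \<le> eigs A ! (n - m + (d + i - 1))"
      by (rule interlacing_eigs(2)[OF SA SB sub j])
    moreover have "n - m + (d + i - 1) = n - q + i - 1" using i m \<open>m \<le> n\<close> by auto
    ultimately show "0 < eig B (d + i) \<and> eig B (d + i) \<le> eig A (n - q + i)" unfolding eig_def by simp
  qed
qed

section \<open>Threshold graphs\<close>

lemma threshold_adj_carrier: "threshold_adj b \<in> carrier_mat (length b) (length b)"
  unfolding threshold_adj_def by simp

lemma threshold_adj_entry:
  "i < length b \<Longrightarrow> j < length b \<Longrightarrow>
    threshold_adj b $$ (i,j) = (if i \<noteq> j \<and> b ! max i j = 1 then 1 else 0)"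
  unfolding threshold_adj_def by simp

lemma symmetric_mat_threshold_adj: "symmetric_mat (length b) (threshold_adj b)"
  unfolding symmetric_mat_def by (simp add: threshold_adj_carrier threshold_adj_entry max.commute)

definition twin_vec :: "nat \<Rightarrow> nat \<Rightarrow> nat \<Rightarrow> real" where
  "twin_vec a c i = (if i = a then 1 else if i = c then -1 else 0)"

lemma twin_vec_eigen_eq:
  assumes a: "a < n" and c: "c < n" and "a \<noteq> c"
    and diag: "M $$ (a,a) = 0" "M $$ (c,c) = 0" and off: "M $$ (a,c) = \<beta>" "M $$ (c,a) = \<beta>"
    and twins: "\<And>i. i < n \<Longrightarrow> i \<noteq> a \<Longrightarrow> i \<noteq> c \<Longrightarrow> M $$ (i,a) = M $$ (i,c)"
  shows "eigen_eq n M (- \<beta>) (twin_vec a c)"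
  unfolding eigen_eq_def
proof (intro allI impI)
  fix i assume i: "i < n"
  have "matvec n M (twin_vec a c) i
      = (\<Sum>l<n. (if l = a then M $$ (i,a) else 0) - (if l = c then M $$ (i,c) else 0))"
    unfolding matvec_def twin_vec_def using \<open>a \<noteq> c\<close> by (intro sum.cong) auto
  also have "\<dots> = M $$ (i,a) - M $$ (i,c)" using a c by (simp add: sum_subtractf)
  also have "\<dots> = - \<beta> * twin_vec a c i" using i diag off twins by (auto simp: twin_vec_def)
  finally show "matvec n M (twin_vec a c) i = - \<beta> * twin_vec a c i" .
qed

text \<open>A sufficient condition for vertices \<open>a < c\<close> of \<open>G(b)\<close> to be twins, i.e.\ to have the same
  neighbours apart from each other: all vertices from \<open>a\<close> to \<open>c\<close> are added with the same label,
  except possibly for \<open>a = 0\<close>, whose label is irrelevant.\<close>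

definition threshold_twins :: "nat list \<Rightarrow> nat \<Rightarrow> nat \<Rightarrow> nat \<Rightarrow> bool" where
  "threshold_twins b l a c \<longleftrightarrow> a < c \<and> c < length b \<and> (\<forall>w. a < w \<and> w \<le> c \<longrightarrow> b ! w = l)
     \<and> (0 < a \<longrightarrow> b ! a = l)"

lemma threshold_twins_eigen_eq:
  assumes "threshold_twins b l a c"
  shows "eigen_eq (length b) (threshold_adj b) (if l = 1 then -1 else 0) (twin_vec a c)"
proof -
  have ac: "a < c" "c < length b" and between: "\<And>w. a < w \<Longrightarrow> w \<le> c \<Longrightarrow> b ! w = l"
    and first: "0 < a \<Longrightarrow> b ! a = l"
    using assms unfolding threshold_twins_def by auto
  have "eigen_eq (length b) (threshold_adj b) (- (if l = 1 then 1 else 0)) (twin_vec a c)"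
  proof (rule twin_vec_eigen_eq)
    fix i assume i: "i < length b" "i \<noteq> a" "i \<noteq> c"
    consider (below) "i < a" | (inside) "a < i" "i < c" | (above) "c < i" using i by linarith
    thus "threshold_adj b $$ (i,a) = threshold_adj b $$ (i,c)"
    proof cases
      case below
      have "b ! a = l" by (rule first) (use below in simp)
      thus ?thesis using below ac i between[of c] by (simp add: threshold_adj_entry max_def)
    next
      case inside
      thus ?thesis using ac i between[of i] between[of c] by (simp add: threshold_adj_entry max_def)
    next
      case above
      thus ?thesis using ac i by (simp add: threshold_adj_entry max_def)
    qed
  qed (use ac between[of c] in \<open>auto simp: threshold_adj_entry max_def\<close>)
  moreover have "- (if l = 1 then 1 else 0) = (if l = 1 then -1 else (0::real))" by simp
  ultimately show ?thesis by simp
qed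

lemma twin_vec_lin_indep:
  fixes a c :: "'k \<Rightarrow> nat"
  assumes K: "finite K" and inj: "inj_on c K" and c: "\<forall>\<kappa>\<in>K. c \<kappa> < n"
    and a: "\<forall>\<kappa>\<in>K. a \<kappa> \<notin> c ` K"
  shows "lin_indep n K (\<lambda>\<kappa>. twin_vec (a \<kappa>) (c \<kappa>))"
  unfolding lin_indep_def
proof (intro allI impI ballI)
  fix \<alpha> \<kappa>0 assume z: "\<forall>i<n. lin_comb K \<alpha> (\<lambda>\<kappa>. twin_vec (a \<kappa>) (c \<kappa>)) i = 0" and \<kappa>0: "\<kappa>0 \<in> K"
  \<comment> \<open>only the \<open>\<kappa>0\<close>-th vector is nonzero at the position \<open>c \<kappa>0\<close>\<close>
  have val: "\<alpha> \<kappa> * twin_vec (a \<kappa>) (c \<kappa>) (c \<kappa>0) = (if \<kappa> = \<kappa>0 then - \<alpha> \<kappa>0 else 0)"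
    if "\<kappa> \<in> K" for \<kappa>
  proof -
    have "c \<kappa>0 \<noteq> a \<kappa>" using a that \<kappa>0 by force
    moreover have "c \<kappa>0 = c \<kappa> \<longleftrightarrow> \<kappa> = \<kappa>0" using inj that \<kappa>0 by (auto dest: inj_onD)
    ultimately show ?thesis by (auto simp: twin_vec_def)
  qed
  have "lin_comb K \<alpha> (\<lambda>\<kappa>. twin_vec (a \<kappa>) (c \<kappa>)) (c \<kappa>0) = (\<Sum>\<kappa>\<in>K. if \<kappa> = \<kappa>0 then - \<alpha> \<kappa>0 else 0)"
    unfolding lin_comb_def using val by (rule sum.cong[OF refl])
  hence "lin_comb K \<alpha> (\<lambda>\<kappa>. twin_vec (a \<kappa>) (c \<kappa>)) (c \<kappa>0) = - \<alpha> \<kappa>0" using K \<kappa>0 by simp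
  thus "\<alpha> \<kappa>0 = 0" using z c \<kappa>0 by simp
qed

lemma threshold_twins_count:
  fixes a c :: "'k \<Rightarrow> nat"
  assumes K: "finite K" and inj: "inj_on c K" and anchors: "\<forall>\<kappa>\<in>K. a \<kappa> \<notin> c ` K"
    and twins: "\<forall>\<kappa>\<in>K. threshold_twins b l (a \<kappa>) (c \<kappa>)"
  shows "card K \<le> eig_count (threshold_adj b) (\<lambda>x. x = (if l = 1 then -1 else 0))"
proof (rule eigenvectors_card_le_eig_count[OF symmetric_mat_threshold_adj K])
  show "lin_indep (length b) K (\<lambda>\<kappa>. twin_vec (a \<kappa>) (c \<kappa>))"
    using twins unfolding threshold_twins_def by (intro twin_vec_lin_indep[OF K inj _ anchors]) blast
  show "\<forall>\<kappa>\<in>K. eigen_eq (length b) (threshold_adj b) (if l = 1 then -1 else 0) (twin_vec (a \<kappa>) (c \<kappa>))"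
    using twins threshold_twins_eigen_eq by blast
qed

lemma lift_Suc_mono_less_bounded:
  fixes f :: "nat \<Rightarrow> nat"
  assumes step: "\<And>j. Suc j < m \<Longrightarrow> f j < f (Suc j)" and "i < j" "j < m"
  shows "f i < f j"
  using assms(2,3)
proof (induction j)
  case (Suc j)
  hence "f i \<le> f j" by (cases "i = j") auto
  also have "f j < f (Suc j)" using step Suc.prems by blast
  finally show ?case .
qed simp

text \<open>The label of the first vertex of a threshold graph is irrelevant: it only meets later vertices.\<close>

lemma threshold_adj_principal_submatrix:
  fixes b c :: "nat list"
  assumes step: "\<And>j. Suc j < length c \<Longrightarrow> \<sigma> j < \<sigma> (Suc j)"
    and into: "\<And>j. j < length c \<Longrightarrow> \<sigma> j < length b"
    and labels: "\<And>j. 0 < j \<Longrightarrow> j < length c \<Longrightarrow> (b ! \<sigma> j = 1) = (c ! j = 1)"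
  shows "principal_submatrix \<sigma> (length c) (threshold_adj c) (length b) (threshold_adj b)"
proof -
  have mono: "\<sigma> i < \<sigma> j" if "i < j" "j < length c" for i j
    by (rule lift_Suc_mono_less_bounded[where f = \<sigma> and m = "length c", OF step that])
  have inj: "inj_on \<sigma> {..<length c}"
  proof (rule inj_onI)
    fix i j assume "i \<in> {..<length c}" "j \<in> {..<length c}" "\<sigma> i = \<sigma> j"
    thus "i = j" using mono[of i j] mono[of j i] by (cases i j rule: linorder_cases) auto
  qed
  have "threshold_adj c $$ (i,j) = threshold_adj b $$ (\<sigma> i, \<sigma> j)" if "i < length c" "j < length c" for i j
  proof (cases "i = j")
    case True thus ?thesis using that into by (simp add: threshold_adj_entry)
  next
    case False
    hence "\<sigma> i \<noteq> \<sigma> j" using inj that by (auto dest: inj_onD)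
    moreover have "max (\<sigma> i) (\<sigma> j) = \<sigma> (max i j)"
      using mono[of i j] mono[of j i] that False by (auto simp: max_def)
    moreover have "(b ! \<sigma> (max i j) = 1) = (c ! max i j = 1)"
      using False that by (intro labels) (auto simp: max_def)
    ultimately show ?thesis using that into False by (simp add: threshold_adj_entry)
  qed
  thus ?thesis unfolding principal_submatrix_def using inj into by auto
qed

section \<open>Anti-regular graphs\<close>

lemma nth_concat_replicate_01: "i < 2 * q \<Longrightarrow> concat (replicate q [0, 1::nat]) ! i = i mod 2"
proof (induct q arbitrary: i)
  case (Suc q)
  show ?case
  proof (cases "i < 2")
    case True thus ?thesis by (cases i) (auto simp: nth_Cons')
  next
    case False
    hence "concat (replicate (Suc q) [0,1::nat]) ! i = concat (replicate q [0,1::nat]) ! (i - 2)"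
      by (simp add: nth_append numeral_2_eq_2)
    also have "\<dots> = (i - 2) mod 2" using Suc False by simp
    also have "\<dots> = i mod 2" using False by presburger
    finally show ?thesis .
  qed
qed simp

lemma length_concat_replicate_01: "length (concat (replicate q [0, 1::nat])) = 2 * q"
  by (induct q) auto

lemma antireg_string_length: "length (antireg_string m) = m"
  unfolding antireg_string_def
  using length_concat_replicate_01[of "m div 2", unfolded One_nat_def] by auto

lemma antireg_string_nth:
  assumes "0 < i" "i < m"
  shows "antireg_string m ! i = (if odd (m + i) then 1 else 0)"
proof (cases "even m")
  case True
  hence "antireg_string m ! i = i mod 2"
    using assms nth_concat_replicate_01[of i "m div 2"] unfolding antireg_string_def by simp
  thus ?thesis using True by (simp add: mod2_eq_if)
next
  case False
  hence "antireg_string m ! i = (i - 1) mod 2"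
    using assms nth_concat_replicate_01[of "i - 1" "m div 2"] unfolding antireg_string_def
    by (simp add: nth_Cons')
  thus ?thesis using False assms by (cases i) (simp_all add: mod2_eq_if)
qed

lemma antireg_adj_entry:
  assumes "i < m" "j < m"
  shows "antireg_adj m $$ (i,j) = (if i \<noteq> j \<and> odd (m + max i j) then 1 else 0)"
proof (cases "i = j")
  case False
  hence "antireg_string m ! max i j = (if odd (m + max i j) then 1 else 0)"
    using assms by (intro antireg_string_nth) (auto simp: max_def)
  thus ?thesis using assms unfolding antireg_adj_def
    by (simp add: threshold_adj_entry antireg_string_length)
qed (use assms in \<open>simp add: antireg_adj_def threshold_adj_entry antireg_string_length\<close>)

lemma symmetric_mat_antireg_adj: "symmetric_mat m (antireg_adj m)"
  using symmetric_mat_threshold_adj[of "antireg_string m"]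
  unfolding antireg_adj_def antireg_string_length .

lemma antireg_adj_principal_submatrix:
  "principal_submatrix Suc m (antireg_adj m) (Suc m) (antireg_adj (Suc m))"
  using threshold_adj_principal_submatrix[of "antireg_string m" Suc "antireg_string (Suc m)"]
  unfolding antireg_adj_def antireg_string_length by (simp add: antireg_string_nth)

text \<open>\<open>A\<^sub>m\<^sub>+\<^sub>2\<close> arises from \<open>A\<^sub>m\<close> by adding an isolated vertex \<open>m\<close> and then a dominating
  vertex \<open>m + 1\<close>.\<close>

lemma matvec_antireg_adj_Suc_Suc:
  shows "i < m \<Longrightarrow> matvec (m+2) (antireg_adj (m+2)) x i = matvec m (antireg_adj m) x i + x (m+1)"
    and "matvec (m+2) (antireg_adj (m+2)) x m = x (m+1)"
    and "matvec (m+2) (antireg_adj (m+2)) x (m+1) = (\<Sum>l<m+1. x l)"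
proof -
  have split: "matvec (m+2) M x i = (\<Sum>l<m. M $$ (i,l) * x l) + M $$ (i,m) * x m + M $$ (i,m+1) * x (m+1)"
    for M i unfolding matvec_def by (simp add: numeral_2_eq_2)
  have "antireg_adj (m+2) $$ (i,l) = antireg_adj m $$ (i,l)" if "i < m" "l < m" for i l
    using that by (simp add: antireg_adj_entry)
  thus "i < m \<Longrightarrow> matvec (m+2) (antireg_adj (m+2)) x i = matvec m (antireg_adj m) x i + x (m+1)"
    unfolding split matvec_def by (simp add: antireg_adj_entry max_def)
  show "matvec (m+2) (antireg_adj (m+2)) x m = x (m+1)"
    unfolding split by (simp add: antireg_adj_entry max_def)
  show "matvec (m+2) (antireg_adj (m+2)) x (m+1) = (\<Sum>l<m+1. x l)"
    unfolding split by (simp add: antireg_adj_entry max_def)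
qed

lemma antireg_adj_even_kernel:
  assumes "\<forall>i<2*k. matvec (2*k) (antireg_adj (2*k)) x i = 0"
  shows "\<forall>i<2*k. x i = 0"
  using assms
proof (induction k)
  case (Suc k)
  let ?m = "2*k"
  have row: "matvec (?m+2) (antireg_adj (?m+2)) x i = 0" if "i < ?m+2" for i
    using Suc.prems that by simp
  have dom: "x (?m+1) = 0" using row[of ?m] matvec_antireg_adj_Suc_Suc(2)[of ?m x] by simp
  have "\<forall>i<?m. matvec ?m (antireg_adj ?m) x i = 0"
    using row matvec_antireg_adj_Suc_Suc(1)[of _ ?m x] dom by simp
  hence old: "\<forall>i<?m. x i = 0" by (rule Suc.IH)
  have "(\<Sum>l<?m+1. x l) = 0" using row[of "?m+1"] matvec_antireg_adj_Suc_Suc(3)[of ?m x] by simp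
  hence "x ?m = 0" using old by simp
  thus ?case using old dom by (auto simp: less_Suc_eq)
qed simp

text \<open>Allowing \<open>(A\<^sub>m + I) x\<close> to be any constant vector, not only zero, is what makes the
  induction go through.\<close>

lemma antireg_adj_odd_shifted_kernel:
  assumes "\<forall>i<2*k+1. matvec (2*k+1) (antireg_adj (2*k+1)) x i + x i = \<alpha>"
    and "(\<Sum>i<2*k+1. x i) = 0"
  shows "\<forall>i<2*k+1. x i = 0"
  using assms
proof (induction k arbitrary: \<alpha>)
  case 0
  have "matvec 1 (antireg_adj 1) x 0 = 0" unfolding matvec_def by (simp add: antireg_adj_entry)
  thus ?case using 0 by simp
next
  case (Suc k)
  let ?m = "2*k+1"
  have row: "matvec (?m+2) (antireg_adj (?m+2)) x i + x i = \<alpha>" if "i < ?m+2" for i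
    using Suc.prems(1) that by simp
  have total: "(\<Sum>l<?m+1. x l) + x (?m+1) = 0" using Suc.prems(2) by simp
  have "\<alpha> = 0" using row[of "?m+1"] matvec_antireg_adj_Suc_Suc(3)[of ?m x] total by simp
  hence pair: "x (?m+1) + x ?m = 0" using row[of ?m] matvec_antireg_adj_Suc_Suc(2)[of ?m x] by simp
  have "\<forall>i<?m. matvec ?m (antireg_adj ?m) x i + x i = - x (?m+1)"
  proof (intro allI impI)
    fix i assume i: "i < ?m"
    have "matvec (?m+2) (antireg_adj (?m+2)) x i + x i = 0" using row[of i] i \<open>\<alpha> = 0\<close> by simp
    moreover have "matvec (?m+2) (antireg_adj (?m+2)) x i = matvec ?m (antireg_adj ?m) x i + x (?m+1)"
      by (rule matvec_antireg_adj_Suc_Suc(1)[OF i])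
    ultimately show "matvec ?m (antireg_adj ?m) x i + x i = - x (?m+1)" by linarith
  qed
  moreover have "(\<Sum>i<?m. x i) = 0" using total pair by simp
  ultimately have old: "\<forall>i<?m. x i = 0" by (rule Suc.IH)
  have "matvec ?m (antireg_adj ?m) x 0 = 0" using old unfolding matvec_def by simp
  hence "x (?m+1) = 0" using row[of 0] matvec_antireg_adj_Suc_Suc(1)[of 0 ?m x] old \<open>\<alpha> = 0\<close> by simp
  hence "x ?m = 0" using pair by simp
  thus ?case using old \<open>x (?m+1) = 0\<close> by (auto simp: less_Suc_eq)
qed

lemma antireg_adj_odd_minus_one_kernel:
  assumes "\<forall>i<2*k+3. matvec (2*k+3) (antireg_adj (2*k+3)) x i = - x i"
  shows "\<forall>i<2*k+3. x i = 0"
proof -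
  have m: "2*k+3 = (2*k+1)+2" "2*k+3 = 2*(k+1)+1" by simp_all
  have "matvec (2*k+3) (antireg_adj (2*k+3)) x (2*k+2) = - x (2*k+2)"
    using assms by simp
  hence "(\<Sum>l<2*k+2. x l) = - x (2*k+2)"
    using matvec_antireg_adj_Suc_Suc(3)[of "2*k+1" x] unfolding m(1) by simp
  hence "(\<Sum>i<2*(k+1)+1. x i) = 0" by simp
  moreover have "\<forall>i<2*(k+1)+1. matvec (2*(k+1)+1) (antireg_adj (2*(k+1)+1)) x i + x i = 0"
    using assms unfolding m(2) by simp
  ultimately show ?thesis unfolding m(2) by (rule antireg_adj_odd_shifted_kernel[rotated])
qed

lemma not_in_eigs_antireg_adj:
  shows "0 \<notin> set (eigs (antireg_adj (2*k)))"
    and "-1 \<notin> set (eigs (antireg_adj (2*k+3)))"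
proof -
  show "0 \<notin> set (eigs (antireg_adj (2*k)))"
  proof (rule not_in_eigs_if_no_eigenvector[OF symmetric_mat_carrier[OF symmetric_mat_antireg_adj]])
    fix x assume "eigen_eq (2*k) (antireg_adj (2*k)) 0 x"
    hence "\<forall>i<2*k. x i = 0" by (intro antireg_adj_even_kernel[of k x]) (simp add: eigen_eq_def)
    thus "\<not> nonzero_on (2*k) x" by (simp add: nonzero_on_def)
  qed
  show "-1 \<notin> set (eigs (antireg_adj (2*k+3)))"
  proof (rule not_in_eigs_if_no_eigenvector[OF symmetric_mat_carrier[OF symmetric_mat_antireg_adj]])
    fix x assume "eigen_eq (2*k+3) (antireg_adj (2*k+3)) (-1) x"
    hence "\<forall>i<2*k+3. x i = 0" by (intro antireg_adj_odd_minus_one_kernel[of k x]) (simp add: eigen_eq_def)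
    thus "\<not> nonzero_on (2*k+3) x" by (simp add: nonzero_on_def)
  qed
qed

lemma antireg_twin_count:
  assumes "2 \<le> m"
  shows "1 \<le> eig_count (antireg_adj m) (\<lambda>x. x = (if odd m then 0 else -1))"
proof -
  let ?b = "antireg_string m"
  have "?b ! 1 = (if odd (m+1) then 1 else 0)"
    by (rule antireg_string_nth) (use assms in auto)
  hence eigval: "(if ?b ! 1 = 1 then -1 else 0) = (if odd m then 0 else (-1::real))"
    by auto
  have "threshold_twins ?b (?b ! 1) 0 1"
    using assms unfolding threshold_twins_def by (auto simp: antireg_string_length le_Suc_eq)
  hence "eigen_eq (length ?b) (threshold_adj ?b) (if ?b ! 1 = 1 then -1 else 0) (twin_vec 0 1)"
    by (rule threshold_twins_eigen_eq)
  hence ev: "eigen_eq m (antireg_adj m) (if odd m then 0 else -1) (twin_vec 0 1)"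
    unfolding antireg_adj_def antireg_string_length eigval .
  have "lin_indep m {0::nat} (\<lambda>_. twin_vec 0 1)"
    by (rule twin_vec_lin_indep) (use assms in auto)
  from eigenvectors_card_le_eig_count[OF symmetric_mat_antireg_adj _ this] ev show ?thesis by simp
qed

lemma antireg_counts_even_step:
  assumes odd: "k \<le> eig_count (antireg_adj (2*k+1)) (\<lambda>x. x < -1)"
      "k \<le> eig_count (antireg_adj (2*k+1)) (\<lambda>x. 0 < x)"
      "1 \<le> eig_count (antireg_adj (2*k+1)) (\<lambda>x. x = 0)"
  shows "k \<le> eig_count (antireg_adj (2*k+2)) (\<lambda>x. x < -1)"
    and "1 \<le> eig_count (antireg_adj (2*k+2)) (\<lambda>x. x = -1)"
    and "k + 1 \<le> eig_count (antireg_adj (2*k+2)) (\<lambda>x. 0 < x)"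
proof -
  let ?A = "antireg_adj (2*k+2)" and ?B = "antireg_adj (2*k+1)"
  have "principal_submatrix Suc (2*k+1) ?B (2*k+2) ?A"
    using antireg_adj_principal_submatrix[of "2*k+1"] by simp
  note interlacing = interlacing_count[OF symmetric_mat_antireg_adj symmetric_mat_antireg_adj this]
  show "k \<le> eig_count ?A (\<lambda>x. x < -1)"
    by (rule order_trans[OF odd(1) interlacing[OF half_line_intros(1)]])
  show "1 \<le> eig_count ?A (\<lambda>x. x = -1)" using antireg_twin_count[of "2*k+2"] by simp
  have "k + 1 \<le> eig_count ?B (\<lambda>x. 0 \<le> x)" using odd(2,3) eig_count_le_split(2)[of ?B 0] by simp
  also have "\<dots> \<le> eig_count ?A (\<lambda>x. 0 \<le> x)" by (rule interlacing[OF half_line_intros(4)])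
  also have "\<dots> = eig_count ?A (\<lambda>x. 0 < x)"
    using eig_count_le_split(2)[of ?A 0] eig_count_eq_0[OF not_in_eigs_antireg_adj(1)[of "k+1"]]
    by (simp add: algebra_simps)
  finally show "k + 1 \<le> eig_count ?A (\<lambda>x. 0 < x)" .
qed

lemma antireg_counts_odd_step:
  assumes even: "k \<le> eig_count (antireg_adj (2*k+2)) (\<lambda>x. x < -1)"
      "1 \<le> eig_count (antireg_adj (2*k+2)) (\<lambda>x. x = -1)"
      "k + 1 \<le> eig_count (antireg_adj (2*k+2)) (\<lambda>x. 0 < x)"
  shows "k + 1 \<le> eig_count (antireg_adj (2*k+3)) (\<lambda>x. x < -1)"
    and "k + 1 \<le> eig_count (antireg_adj (2*k+3)) (\<lambda>x. 0 < x)"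
    and "1 \<le> eig_count (antireg_adj (2*k+3)) (\<lambda>x. x = 0)"
proof -
  let ?A = "antireg_adj (2*k+3)" and ?B = "antireg_adj (2*k+2)"
  have "principal_submatrix Suc (2*k+2) ?B (2*k+3) ?A"
    using antireg_adj_principal_submatrix[of "2*k+2"] by (simp add: eval_nat_numeral)
  note interlacing = interlacing_count[OF symmetric_mat_antireg_adj symmetric_mat_antireg_adj this]
  have "k + 1 \<le> eig_count ?B (\<lambda>x. x \<le> -1)" using even(1,2) eig_count_le_split(1)[of ?B "-1"] by simp
  also have "\<dots> \<le> eig_count ?A (\<lambda>x. x \<le> -1)" by (rule interlacing[OF half_line_intros(2)])
  also have "\<dots> = eig_count ?A (\<lambda>x. x < -1)"
    using eig_count_le_split(1)[of ?A "-1"] eig_count_eq_0[OF not_in_eigs_antireg_adj(2)[of k]] by simp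
  finally show "k + 1 \<le> eig_count ?A (\<lambda>x. x < -1)" .
  show "k + 1 \<le> eig_count ?A (\<lambda>x. 0 < x)"
    by (rule order_trans[OF even(3) interlacing[OF half_line_intros(3)]])
  show "1 \<le> eig_count ?A (\<lambda>x. x = 0)" using antireg_twin_count[of "2*k+3"] by simp
qed

lemma antireg_counts:
  "k \<le> eig_count (antireg_adj (2*k+1)) (\<lambda>x. x < -1) \<and> k \<le> eig_count (antireg_adj (2*k+1)) (\<lambda>x. 0 < x)
    \<and> 1 \<le> eig_count (antireg_adj (2*k+1)) (\<lambda>x. x = 0)"
proof (induction k)
  case 0
  have "eigen_eq 1 (antireg_adj 1) 0 (\<lambda>_. 1)" by (simp add: eigen_eq_def matvec_def antireg_adj_entry)
  moreover have "lin_indep 1 {0::nat} (\<lambda>_ _. 1)" by (simp add: lin_indep_def lin_comb_def)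
  ultimately have "card {0::nat} \<le> eig_count (antireg_adj 1) (\<lambda>x. x = 0)"
    by (intro eigenvectors_card_le_eig_count[OF symmetric_mat_antireg_adj]) auto
  thus ?case by simp
next
  case (Suc k)
  note even = antireg_counts_even_step[of k] Suc.IH
  show ?case using antireg_counts_odd_step[of k] even by (simp add: eval_nat_numeral)
qed

lemma antireg_odd_count_bounds:
  "k \<le> eig_count (antireg_adj (2*k+1)) (\<lambda>x. x < -1)" "k \<le> eig_count (antireg_adj (2*k+1)) (\<lambda>x. 0 < x)"
  using antireg_counts[of k] by simp_all

lemma antireg_even_count_bounds:
  assumes "1 \<le> k"
  shows "k - 1 \<le> eig_count (antireg_adj (2*k)) (\<lambda>x. x < -1)" "k \<le> eig_count (antireg_adj (2*k)) (\<lambda>x. 0 < x)"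
proof -
  obtain j where k: "k = Suc j" using assms by (cases k) auto
  hence "2 * k = 2 * j + 2" by simp
  thus "k - 1 \<le> eig_count (antireg_adj (2*k)) (\<lambda>x. x < -1)" "k \<le> eig_count (antireg_adj (2*k)) (\<lambda>x. 0 < x)"
    using antireg_counts_even_step[of j] antireg_counts[of j] k by simp_all
qed

definition block_start :: "(nat \<Rightarrow> nat) \<Rightarrow> (nat \<Rightarrow> nat) \<Rightarrow> nat \<Rightarrow> nat" where
  "block_start s t i = (\<Sum>l<i. s l + t l)"

lemma block_start_Suc: "block_start s t (Suc i) = block_start s t i + s i + t i"
  unfolding block_start_def by simp

lemma block_string_Suc:
  "block_string (Suc k) s t = block_string k s t @ replicate (s k) 0 @ replicate (t k) 1"
  unfolding block_string_def by simp

lemma length_block_string: "length (block_string k s t) = block_start s t k"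
  by (induct k) (simp_all add: block_string_Suc block_start_Suc, simp add: block_string_def block_start_def)

lemma block_start_less:
  assumes "i < j" "r < s i + t i"
  shows "block_start s t i + r < block_start s t j"
proof -
  have "block_start s t i + r < block_start s t (Suc i)" using assms(2) by (simp add: block_start_Suc)
  also have "\<dots> \<le> block_start s t j" using assms(1) unfolding block_start_def by (intro sum_mono2) auto
  finally show ?thesis .
qed

lemma block_string_nth:
  assumes "i < k" "r < s i + t i"
  shows "block_string k s t ! (block_start s t i + r) = (if r < s i then 0 else 1)"
  using assms
proof (induct k)
  case (Suc k)
  show ?case
  proof (cases "i < k")
    case True
    have "block_start s t i + r < length (block_string k s t)"
      unfolding length_block_string by (rule block_start_less[of i k r s t, OF True Suc(3)])
    thus ?thesis unfolding block_string_Suc using Suc True by (simp add: nth_append)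
  next
    case False
    hence "i = k" using Suc by simp
    thus ?thesis unfolding block_string_Suc using Suc(3) by (simp add: nth_append length_block_string)
  qed
qed simp

lemma block_position_inj:
  assumes "r < s i + t i" "r' < s i' + t i'" "block_start s t i + r = block_start s t i' + r'"
  shows "i = i' \<and> r = r'"
  using block_start_less[of i i' r s t] block_start_less[of i' i r' s t] assms
  by (cases i i' rule: linorder_cases) auto

lemma parity_cases:
  obtains (even) i where "j = 2 * i" | (odd) i where "j = Suc (2 * i)"
  by (cases "even j") (auto elim!: evenE oddE)

lemma parity_cases_Suc:
  obtains (zero) "j = 0" | (odd) i where "j = Suc (2 * i)" | (even) i where "j = Suc (Suc (2 * i))"
proof (cases j)
  case (Suc j')
  thus thesis by (cases j' rule: parity_cases) (use that in blast)+
qed (use that in blast)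

locale threshold_blocks =
  fixes k :: nat and s t :: "nat \<Rightarrow> nat"
  assumes k_pos: "1 \<le> k" and blocks_nonempty: "\<forall>i<k. 1 \<le> s i \<and> 1 \<le> t i"
begin

abbreviation bs :: "nat list" where "bs \<equiv> block_string k s t"
abbreviation start :: "nat \<Rightarrow> nat" where "start \<equiv> block_start s t"

lemma s_pos: "i < k \<Longrightarrow> 1 \<le> s i" and t_pos: "i < k \<Longrightarrow> 1 \<le> t i"
  using blocks_nonempty by auto

lemma length_bs: "length bs = (\<Sum>i<k. s i) + (\<Sum>i<k. t i)"
  unfolding length_block_string block_start_def by (simp add: sum.distrib)

lemma k_le_sum: "k \<le> (\<Sum>i<k. s i)" "k \<le> (\<Sum>i<k. t i)"
proof -
  have "(\<Sum>i<k. 1) \<le> (\<Sum>i<k. s i)" "(\<Sum>i<k. 1) \<le> (\<Sum>i<k. t i)"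
    using s_pos t_pos by (auto intro!: sum_mono simp del: sum_constant)
  thus "k \<le> (\<Sum>i<k. s i)" "k \<le> (\<Sum>i<k. t i)" by simp_all
qed

lemma bs_nth: "i < k \<Longrightarrow> r < s i + t i \<Longrightarrow> bs ! (start i + r) = (if r < s i then 0 else 1)"
  by (rule block_string_nth)

lemma position_less_length: "i < k \<Longrightarrow> r < s i + t i \<Longrightarrow> start i + r < length bs"
  unfolding length_block_string by (rule block_start_less)

text \<open>The anti-regular graphs sit inside \<open>G\<close> as induced subgraphs: \<open>A\<^sub>2\<^sub>k\<close> on the first vertex
  of every block of zeros and of every block of ones, and, if \<open>s\<^sub>1 \<ge> 2\<close>, \<open>A\<^sub>2\<^sub>k\<^sub>+\<^sub>1\<close> on these
  together with the second vertex of the first block of zeros.\<close>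

definition even_embedding :: "nat \<Rightarrow> nat" where
  "even_embedding j = start (j div 2) + (if even j then 0 else s (j div 2))"

definition odd_embedding :: "nat \<Rightarrow> nat" where
  "odd_embedding j = (case j of 0 \<Rightarrow> 0 | Suc j' \<Rightarrow> even_embedding j' + (if j' = 0 then 1 else 0))"

lemma even_embedding_simps [simp]:
  "even_embedding (2 * i) = start i" "even_embedding (Suc (2 * i)) = start i + s i"
  "even_embedding (Suc (Suc (2 * i))) = start (Suc i)"
  unfolding even_embedding_def by simp_all

lemma odd_embedding_simps [simp]:
  "odd_embedding 0 = 0" "odd_embedding (Suc (2 * i)) = start i + (if i = 0 then 1 else 0)"
  "odd_embedding (Suc (Suc (2 * i))) = start i + s i"
  "odd_embedding (Suc (Suc (Suc (2 * i)))) = start (Suc i)"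
  unfolding odd_embedding_def even_embedding_def by simp_all

lemma even_embedding_vertex:
  assumes j: "j < 2*k"
  shows "even_embedding j < length bs
    \<and> (0 < j \<longrightarrow> (bs ! even_embedding j = 1) = (antireg_string (2*k) ! j = 1))
    \<and> (Suc j < 2*k \<longrightarrow> even_embedding j < even_embedding (Suc j))"
proof (cases j rule: parity_cases)
  case (even i)
  hence "i < k" using j by simp
  thus ?thesis using even j s_pos[of i] position_less_length[of i 0] bs_nth[of i 0]
    by (simp add: antireg_string_nth)
next
  case (odd i)
  hence "i < k" using j by simp
  thus ?thesis using odd j t_pos[of i] position_less_length[of i "s i"] bs_nth[of i "s i"]
    by (simp add: antireg_string_nth block_start_Suc)
qed

lemma odd_embedding_vertex:
  assumes s0: "2 \<le> s 0" and j: "j < 2*k+1"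
  shows "odd_embedding j < length bs
    \<and> (0 < j \<longrightarrow> (bs ! odd_embedding j = 1) = (antireg_string (2*k+1) ! j = 1))
    \<and> (Suc j < 2*k+1 \<longrightarrow> odd_embedding j < odd_embedding (Suc j))"
proof (cases j rule: parity_cases_Suc)
  case zero
  thus ?thesis using position_less_length[of 0 0] k_pos s_pos[of 0] odd_embedding_simps(2)[of 0]
    by (simp add: block_start_def)
next
  case (odd i)
  hence i: "i < k" using j by simp
  have "(if i = 0 then 1 else 0) < s i" using s0 s_pos[OF i] by auto
  thus ?thesis using odd i j position_less_length[of i "if i = 0 then 1 else 0"]
      bs_nth[of i "if i = 0 then 1 else 0"]
    by (simp add: antireg_string_nth)
next
  case (even i)
  hence "i < k" using j by simp
  thus ?thesis using even j t_pos[of i] position_less_length[of i "s i"] bs_nth[of i "s i"]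
    by (simp add: antireg_string_nth block_start_Suc)
qed

lemma principal_submatrix_even_embedding:
  "principal_submatrix even_embedding (2*k) (antireg_adj (2*k)) (length bs) (threshold_adj bs)"
proof -
  have "principal_submatrix even_embedding (length (antireg_string (2*k)))
      (threshold_adj (antireg_string (2*k))) (length bs) (threshold_adj bs)"
  proof (rule threshold_adj_principal_submatrix, unfold antireg_string_length)
    fix j assume "Suc j < 2*k"
    thus "even_embedding j < even_embedding (Suc j)" using even_embedding_vertex[of j] by simp
  next
    fix j assume "j < 2*k"
    thus "even_embedding j < length bs" using even_embedding_vertex[of j] by simp
  next
    fix j assume "0 < j" "j < 2*k"
    thus "(bs ! even_embedding j = 1) = (antireg_string (2*k) ! j = 1)"
      using even_embedding_vertex[of j] by simp
  qed
  thus ?thesis unfolding antireg_adj_def antireg_string_length .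
qed

lemma principal_submatrix_odd_embedding:
  assumes s0: "2 \<le> s 0"
  shows "principal_submatrix odd_embedding (2*k+1) (antireg_adj (2*k+1)) (length bs) (threshold_adj bs)"
proof -
  have "principal_submatrix odd_embedding (length (antireg_string (2*k+1)))
      (threshold_adj (antireg_string (2*k+1))) (length bs) (threshold_adj bs)"
  proof (rule threshold_adj_principal_submatrix, unfold antireg_string_length)
    fix j assume "Suc j < 2*k+1"
    thus "odd_embedding j < odd_embedding (Suc j)" using odd_embedding_vertex[OF s0, of j] by simp
  next
    fix j assume "j < 2*k+1"
    thus "odd_embedding j < length bs" using odd_embedding_vertex[OF s0, of j] by simp
  next
    fix j assume "0 < j" "j < 2*k+1"
    thus "(bs ! odd_embedding j = 1) = (antireg_string (2*k+1) ! j = 1)"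
      using odd_embedding_vertex[OF s0, of j] by simp
  qed
  thus ?thesis unfolding antireg_adj_def antireg_string_length .
qed

text \<open>Twins inside a block of zeros give the eigenvalue \<open>0\<close>, twins inside a block of ones the
  eigenvalue \<open>-1\<close>; if \<open>s\<^sub>1 = 1\<close>, the first vertex is moreover a twin of the first block of ones.\<close>

definition zero_twins :: "(nat \<times> nat) set" where
  "zero_twins = {(i, r). i < k \<and> 1 \<le> r \<and> r < s i}"

definition first_one_twin :: "nat \<Rightarrow> nat" where
  "first_one_twin i = (if i = 0 \<and> s 0 = 1 then 0 else 1)"

definition one_twins :: "(nat \<times> nat) set" where
  "one_twins = {(i, r). i < k \<and> first_one_twin i \<le> r \<and> r < t i}"

definition one_anchor :: "nat \<Rightarrow> nat" where
  "one_anchor i = (if i = 0 \<and> s 0 = 1 then 0 else start i + s i)"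

lemma zero_twins_Sigma: "zero_twins = Sigma {..<k} (\<lambda>i. {1..<s i})"
  unfolding zero_twins_def by auto

lemma one_twins_Sigma: "one_twins = Sigma {..<k} (\<lambda>i. {first_one_twin i..<t i})"
  unfolding one_twins_def by auto

lemma card_zero_twins: "card zero_twins = (\<Sum>i<k. s i) - k"
proof -
  have "card zero_twins = (\<Sum>i<k. s i - 1)" unfolding zero_twins_Sigma by (simp add: card_SigmaI)
  also have "\<dots> = (\<Sum>i<k. s i) - (\<Sum>i<k. 1)" using s_pos by (intro sum_subtractf_nat) auto
  finally show ?thesis by simp
qed

lemma card_one_twins: "card one_twins = (\<Sum>i<k. t i) - k + (if s 0 = 1 then 1 else 0)"
proof -
  have "card one_twins = (\<Sum>i<k. t i - first_one_twin i)"
    unfolding one_twins_Sigma by (simp add: card_SigmaI)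
  also have "\<dots> = (\<Sum>i<k. t i) - (\<Sum>i<k. first_one_twin i)"
    using t_pos by (intro sum_subtractf_nat) (auto simp: first_one_twin_def)
  also have "(\<Sum>i<k. first_one_twin i) = k - (if s 0 = 1 then 1 else 0)"
  proof -
    obtain k' where k': "k = Suc k'" using k_pos by (cases k) auto
    have "(\<Sum>i<k. first_one_twin i) = first_one_twin 0 + (\<Sum>i<k'. first_one_twin (Suc i))"
      unfolding k' by (rule sum.lessThan_Suc_shift)
    thus ?thesis unfolding k' by (simp add: first_one_twin_def)
  qed
  finally show ?thesis using k_le_sum(2) k_pos by auto
qed

lemma zero_twins_threshold_twins:
  assumes "(i, r) \<in> zero_twins"
  shows "threshold_twins bs 0 (start i) (start i + r)"
proof -
  have ir: "i < k" "1 \<le> r" "r < s i" using assms unfolding zero_twins_def by auto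
  have "bs ! w = 0" if "start i \<le> w" "w \<le> start i + r" for w
    using bs_nth[of i "w - start i"] ir that by simp
  thus ?thesis using ir position_less_length[of i r] unfolding threshold_twins_def by auto
qed

lemma one_twins_threshold_twins:
  assumes "(i, r) \<in> one_twins"
  shows "threshold_twins bs 1 (one_anchor i) (start i + s i + r)"
proof -
  have ir: "i < k" "r < t i" using assms unfolding one_twins_def by auto
  have "bs ! w = 1" if "start i + s i \<le> w" "w \<le> start i + s i + r" for w
    using bs_nth[of i "w - start i"] ir that by simp
  moreover have "bs ! w = 1" if "0 < w" "w \<le> start 0 + s 0 + r" "i = 0" "s 0 = 1" for w
    using bs_nth[of 0 w] ir that by (simp add: block_start_def)
  moreover have "one_anchor i < start i + s i + r"
    using assms s_pos[of i] by (auto simp: one_twins_def one_anchor_def first_one_twin_def)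
  ultimately show ?thesis
    using ir position_less_length[of i "s i + r"] unfolding threshold_twins_def one_anchor_def
    by (auto simp: add.assoc)
qed

lemma zero_twins_count: "(\<Sum>i<k. s i) - k \<le> eig_count (threshold_adj bs) (\<lambda>x. x = 0)"
proof -
  have "card zero_twins \<le> eig_count (threshold_adj bs) (\<lambda>x. x = (if (0::nat) = 1 then -1 else 0))"
  proof (rule threshold_twins_count[where a = "\<lambda>(i, r). start i" and c = "\<lambda>(i, r). start i + r"])
    show "finite zero_twins" unfolding zero_twins_Sigma by simp
    show "inj_on (\<lambda>(i, r). start i + r) zero_twins"
    proof (rule inj_onI, clarify)
      fix i r i' r' assume "(i, r) \<in> zero_twins" "(i', r') \<in> zero_twins" "start i + r = start i' + r'"
      thus "i = i' \<and> r = r'" using block_position_inj[of r s i t r' i'] by (auto simp: zero_twins_def)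
    qed
    show "\<forall>\<kappa>\<in>zero_twins. (\<lambda>(i, r). start i) \<kappa> \<notin> (\<lambda>(i, r). start i + r) ` zero_twins"
    proof (clarify)
      fix i r i' r' assume "(i, r) \<in> zero_twins" "(i', r') \<in> zero_twins" "start i = start i' + r'"
      thus False using block_position_inj[of 0 s i t r' i'] by (auto simp: zero_twins_def)
    qed
    show "\<forall>\<kappa>\<in>zero_twins. threshold_twins bs 0 ((\<lambda>(i, r). start i) \<kappa>) ((\<lambda>(i, r). start i + r) \<kappa>)"
      using zero_twins_threshold_twins by auto
  qed
  thus ?thesis using card_zero_twins by simp
qed

lemma one_twins_count:
  "(\<Sum>i<k. t i) - k + (if s 0 = 1 then 1 else 0) \<le> eig_count (threshold_adj bs) (\<lambda>x. x = -1)"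
proof -
  have "card one_twins \<le> eig_count (threshold_adj bs) (\<lambda>x. x = (if (1::nat) = 1 then -1 else 0))"
  proof (rule threshold_twins_count[where a = "\<lambda>(i, r). one_anchor i" and c = "\<lambda>(i, r). start i + s i + r"])
    show "finite one_twins" unfolding one_twins_Sigma by simp
    show "inj_on (\<lambda>(i, r). start i + s i + r) one_twins"
    proof (rule inj_onI, clarify)
      fix i r i' r' assume "(i, r) \<in> one_twins" "(i', r') \<in> one_twins" "start i + s i + r = start i' + s i' + r'"
      thus "i = i' \<and> r = r'"
        using block_position_inj[of "s i + r" s i t "s i' + r'" i'] by (auto simp: one_twins_def)
    qed
    show "\<forall>\<kappa>\<in>one_twins. (\<lambda>(i, r). one_anchor i) \<kappa> \<notin> (\<lambda>(i, r). start i + s i + r) ` one_twins"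
    proof (clarify)
      fix i r i' r' assume ir: "(i, r) \<in> one_twins" and ir': "(i', r') \<in> one_twins"
        and eq: "one_anchor i = start i' + s i' + r'"
      show False
      proof (cases "i = 0 \<and> s 0 = 1")
        case True thus False using eq ir' s_pos[of i'] by (auto simp: one_anchor_def one_twins_def)
      next
        case False
        hence "one_anchor i = start i + s i" unfolding one_anchor_def by (rule if_not_P)
        hence "i = i' \<and> s i = s i' + r'"
          using eq ir ir' t_pos[of i] block_position_inj[of "s i" s i t "s i' + r'" i']
          by (auto simp: one_twins_def add.assoc)
        thus False using False ir' by (auto simp: one_twins_def first_one_twin_def)
      qed
    qed
    show "\<forall>\<kappa>\<in>one_twins. threshold_twins bs 1 ((\<lambda>(i, r). one_anchor i) \<kappa>) ((\<lambda>(i, r). start i + s i + r) \<kappa>)"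
      using one_twins_threshold_twins by auto
  qed
  thus ?thesis using card_one_twins by simp
qed

lemma interlacing_lower_bounds:
  "k - (if s 0 = 1 then 1 else 0) \<le> eig_count (threshold_adj bs) (\<lambda>x. x < -1)
    \<and> k \<le> eig_count (threshold_adj bs) (\<lambda>x. 0 < x)"
proof (cases "s 0 = 1")
  case True
  note interlacing = interlacing_count[OF symmetric_mat_threshold_adj symmetric_mat_antireg_adj
      principal_submatrix_even_embedding]
  show ?thesis
    using order_trans[OF antireg_even_count_bounds(1)[OF k_pos] interlacing[OF half_line_intros(1)]]
      order_trans[OF antireg_even_count_bounds(2)[OF k_pos] interlacing[OF half_line_intros(3)]] True
    by simp
next
  case False
  hence "2 \<le> s 0" using s_pos[of 0] k_pos by simp
  note interlacing = interlacing_count[OF symmetric_mat_threshold_adj symmetric_mat_antireg_adj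
      principal_submatrix_odd_embedding[OF this]]
  show ?thesis
    using order_trans[OF antireg_odd_count_bounds(1) interlacing[OF half_line_intros(1)]]
      order_trans[OF antireg_odd_count_bounds(2) interlacing[OF half_line_intros(3)]] False
    by simp
qed

text \<open>The lower bounds from interlacing and from the twins add up to the number of vertices,
  so they are all attained and there are no eigenvalues strictly between \<open>-1\<close> and \<open>0\<close>.\<close>

lemma eig_count_threshold_adj:
  defines "e \<equiv> if s 0 = 1 then 1 else 0"
  shows "eig_count (threshold_adj bs) (\<lambda>x. x < -1) = k - e"
    and "eig_count (threshold_adj bs) (\<lambda>x. x = -1) = (\<Sum>i<k. t i) - k + e"
    and "eig_count (threshold_adj bs) (\<lambda>x. -1 < x \<and> x < 0) = 0"
    and "eig_count (threshold_adj bs) (\<lambda>x. x = 0) = (\<Sum>i<k. s i) - k"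
    and "eig_count (threshold_adj bs) (\<lambda>x. 0 < x) = k"
proof -
  have "length bs = eig_count (threshold_adj bs) (\<lambda>x. x < -1) + eig_count (threshold_adj bs) (\<lambda>x. x = -1)
     + eig_count (threshold_adj bs) (\<lambda>x. -1 < x \<and> x < 0) + eig_count (threshold_adj bs) (\<lambda>x. x = 0)
     + eig_count (threshold_adj bs) (\<lambda>x. 0 < x)"
    unfolding length_eigs[OF symmetric_mat_threshold_adj, symmetric] by (rule eig_count_partition)
  moreover have "e \<le> 1" "1 \<le> k" unfolding e_def using k_pos by auto
  moreover note length_bs k_le_sum interlacing_lower_bounds[folded e_def]
    zero_twins_count one_twins_count[folded e_def]
  ultimately show "eig_count (threshold_adj bs) (\<lambda>x. x < -1) = k - e"
    and "eig_count (threshold_adj bs) (\<lambda>x. x = -1) = (\<Sum>i<k. t i) - k + e"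
    and "eig_count (threshold_adj bs) (\<lambda>x. -1 < x \<and> x < 0) = 0"
    and "eig_count (threshold_adj bs) (\<lambda>x. x = 0) = (\<Sum>i<k. s i) - k"
    and "eig_count (threshold_adj bs) (\<lambda>x. 0 < x) = k"
    by linarith+
qed

lemma spectrum_first_block_long:
  assumes s0: "2 \<le> s 0"
  defines "G \<equiv> threshold_adj bs" and "H \<equiv> antireg_adj (2*k+1)"
    and "n \<equiv> (\<Sum>i<k. s i) + (\<Sum>i<k. t i)"
  shows "(\<forall>i\<in>{1..k}. eig G i \<le> eig H i \<and> eig H i < -1)
      \<and> (\<forall>i\<in>{1..k}. 0 < eig H (k+1+i) \<and> eig H (k+1+i) \<le> eig G (n-k+i))
      \<and> eig_mult (-1) G = (\<Sum>i<k. t i) - k \<and> eig_mult 0 G = (\<Sum>i<k. s i) - k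
      \<and> nontriv_neg G = k \<and> nontriv_pos G = k"
proof -
  have "2*k+1 = (k+1) + k" by simp
  note bounds = interlaced_extreme_eigenvalues[OF symmetric_mat_threshold_adj symmetric_mat_antireg_adj
      principal_submatrix_odd_embedding[OF s0] antireg_odd_count_bounds this, folded G_def H_def,
      unfolded length_bs, folded n_def]
  have "G \<in> carrier_mat (length bs) (length bs)" unfolding G_def by (rule threshold_adj_carrier)
  thus ?thesis using bounds eig_count_threshold_adj s0 unfolding G_def
    by (simp add: eig_mult_eq_eig_count nontriv_neg_eq_eig_count nontriv_pos_eq_eig_count)
qed

lemma spectrum_first_block_single:
  assumes s0: "s 0 = 1"
  defines "G \<equiv> threshold_adj bs" and "H \<equiv> antireg_adj (2*k)"
    and "n \<equiv> (\<Sum>i<k. s i) + (\<Sum>i<k. t i)"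
  shows "(\<forall>i\<in>{1..k-1}. eig G i \<le> eig H i \<and> eig H i < -1)
      \<and> (\<forall>i\<in>{1..k}. 0 < eig H (k+i) \<and> eig H (k+i) \<le> eig G (n-k+i))
      \<and> eig_mult (-1) G = (\<Sum>i<k. t i) - k + 1 \<and> eig_mult 0 G = (\<Sum>i<k. s i) - k
      \<and> nontriv_neg G = k - 1 \<and> nontriv_pos G = k"
proof -
  have "2*k = k + k" by simp
  note bounds = interlaced_extreme_eigenvalues[OF symmetric_mat_threshold_adj symmetric_mat_antireg_adj
      principal_submatrix_even_embedding antireg_even_count_bounds[OF k_pos] this, folded G_def H_def,
      unfolded length_bs, folded n_def]
  have "G \<in> carrier_mat (length bs) (length bs)" unfolding G_def by (rule threshold_adj_carrier)
  thus ?thesis using bounds eig_count_threshold_adj s0 unfolding G_def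
    by (simp add: eig_mult_eq_eig_count nontriv_neg_eq_eig_count nontriv_pos_eq_eig_count)
qed

lemma inertia_threshold_adj: "inertia (threshold_adj bs) = ((\<Sum>i<k. t i), (\<Sum>i<k. s i) - k, k)"
  using eig_count_threshold_adj k_le_sum k_pos unfolding inertia_eq_eig_count by auto

end

theorem theorem4p1:
  fixes k :: nat and s t :: "nat \<Rightarrow> nat"
  assumes "k \<ge> 1"
    and "\<forall>i<k. s i \<ge> 1 \<and> t i \<ge> 1"
  defines "G \<equiv> threshold_adj (block_string k s t)"
    and "S \<equiv> (\<Sum>i<k. s i)" and "T \<equiv> (\<Sum>i<k. t i)"
    and "n \<equiv> (\<Sum>i<k. s i) + (\<Sum>i<k. t i)"
  shows
    "(s 0 \<ge> 2 \<longrightarrow>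
        (\<forall>i\<in>{1..k}. eig G i \<le> eig (antireg_adj (2*k+1)) i \<and> eig (antireg_adj (2*k+1)) i < -1)
      \<and> (\<forall>i\<in>{1..k}. 0 < eig (antireg_adj (2*k+1)) (k+1+i)
                     \<and> eig (antireg_adj (2*k+1)) (k+1+i) \<le> eig G (n-k+i))
      \<and> eig_mult (-1) G = T - k \<and> eig_mult 0 G = S - k
      \<and> nontriv_neg G = k \<and> nontriv_pos G = k)
   \<and> (s 0 = 1 \<longrightarrow>
        (\<forall>i\<in>{1..k-1}. eig G i \<le> eig (antireg_adj (2*k)) i \<and> eig (antireg_adj (2*k)) i < -1)
      \<and> (\<forall>i\<in>{1..k}. 0 < eig (antireg_adj (2*k)) (k+i)
                     \<and> eig (antireg_adj (2*k)) (k+i) \<le> eig G (n-k+i))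
      \<and> eig_mult (-1) G = T - k + 1 \<and> eig_mult 0 G = S - k
      \<and> nontriv_neg G = k - 1 \<and> nontriv_pos G = k)
   \<and> inertia G = (T, S - k, k)"
proof -
  interpret threshold_blocks k s t using assms(1,2) by unfold_locales auto
  show ?thesis unfolding G_def S_def T_def n_def
    using spectrum_first_block_long spectrum_first_block_single inertia_threshold_adj by blast
qed

end
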